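(* Let $x$ be a real number with $0<x<1$, and put $s=\sqrt{1-x^2}>0$. Then, as an identity of power series in $q$ (convergent for $|q|<1$), $$\sum_{\lambda\in \mathcal{SC}} x^{n_1(\lambda)} \, q^{\vert\lambda\vert} =\frac{(-q;q^2)_{\infty}}{2x}\left[\left(1-\sqrt{\tfrac{1-x}{1+x}}\right)(-s;-q)_{\infty} + \left(1+\sqrt{\tfrac{1-x}{1+x}} \right)(s;-q)_{\infty} \right].$$
   Context: A partition is self-conjugate if its Young diagram is symmetric about the main diagonal; $\mathcal{SC}$ is the set of all self-conjugate partitions (including the empty partition of size $0$), and $|\lambda|$ is the size. The hook length of the cell $(i,j)$ is the number of cells to its right in row $i$ plus the number below it in column $j$ plus $1$; $n_1(\lambda)$ is the number of cells of $\lambda$ with hook length $1$. $(a;q)_\infty=\prod_{j\ge0}(1-aq^j)$. *)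

theory Defs
  imports "HOL-Analysis.Analysis"
begin

definition is_partition :: "nat list \<Rightarrow> bool" where
  "is_partition la \<longleftrightarrow> sorted_wrt (\<ge>) la \<and> (\<forall>p\<in>set la. 0 < p)"

definition conjugate :: "nat list \<Rightarrow> nat list" where
  "conjugate la = map (\<lambda>j. length (filter (\<lambda>p. j < p) la)) [0..<(if la = [] then 0 else hd la)]"

definition SC :: "nat list set" where
  "SC = {la. is_partition la \<and> conjugate la = la}"

definition psize :: "nat list \<Rightarrow> nat" where
  "psize la = sum_list la"

text \<open>Cells (i,j), 0-indexed: row i, column j.\<close>
definition cells :: "nat list \<Rightarrow> (nat \<times> nat) set" where
  "cells la = {(i, j). i < length la \<and> j < la ! i}"

text \<open>Hook length: arm (cells to the right) + leg (cells below) + 1.\<close>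
definition hook :: "nat list \<Rightarrow> nat \<times> nat \<Rightarrow> nat" where
  "hook la c = (case c of (i, j) \<Rightarrow> (la ! i - j - 1) + (conjugate la ! j - i - 1) + 1)"

definition n1 :: "nat list \<Rightarrow> nat" where
  "n1 la = card {c \<in> cells la. hook la c = 1}"

definition qpoch_inf :: "real \<Rightarrow> real \<Rightarrow> real" where
  "qpoch_inf a q = (\<Prod>j. 1 - a * q ^ j)"

end

theory Submission
  imports Defs
begin

text \<open>
  A self-conjugate partition is determined by the side d of its Durfee square together with
  the weakly decreasing list \<mu> of d nonnegative integers recording the row lengths to the right
  of the square. Its size is d^2 + 2 sum \<mu>, and its cells of hook length 1 are its corners, of
  which there are as many as distinct entries of \<mu> plus distinct nonzero entries of \<mu>.
  Removing the zero entries of \<mu> gives a recurrence in d whose solution, with p = q^2, is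
  (p^d + (1 - p^d)/x) (1 - x^2; p)_d / (p; p)_d.
  The remaining sum over d of q^(d^2) r^d (u; p)_d / (p; p)_d is evaluated by expanding (u; p)_d with
  the q-binomial theorem and summing the resulting absolutely convergent double series the other
  way round with Euler's expansion of (a; b)_\<infinity>. For r = p and r = 1 the rows of the double
  series combine into the even and odd parts of Euler's series for (\<plusminus>s; -q)_\<infinity>.
\<close>

fun tri :: "nat \<Rightarrow> nat" where
  "tri 0 = 0" | "tri (Suc k) = tri k + k"

definition qpoch :: "real \<Rightarrow> real \<Rightarrow> nat \<Rightarrow> real" where
  "qpoch a b n = (\<Prod>j<n. 1 - a * b^j)"

lemma qpoch_0[simp]: "qpoch a b 0 = 1" by (simp add: qpoch_def)
lemma qpoch_Suc: "qpoch a b (Suc n) = qpoch a b n * (1 - a * b^n)" by (simp add: qpoch_def)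

lemma abs_mult_less_one:
  assumes "\<bar>a::real\<bar> < 1" "\<bar>c\<bar> \<le> 1"
  shows "\<bar>a * c\<bar> < 1"
proof -
  have "\<bar>a\<bar> * \<bar>c\<bar> \<le> \<bar>a\<bar>" using assms(2) by (simp add: mult_left_le)
  then show ?thesis using assms(1) by (simp add: abs_mult)
qed

lemma abs_power_less_one: "\<bar>b::real\<bar> < 1 \<Longrightarrow> 0 < n \<Longrightarrow> \<bar>b^n\<bar> < 1"
  by (simp add: power_abs power_less_one_iff)

lemma qpoch_pos:
  assumes "\<bar>a\<bar> < 1" "\<bar>b\<bar> \<le> 1"
  shows "qpoch a b n > 0"
proof -
  have "\<bar>a * b^j\<bar> < 1" for j using assms by (intro abs_mult_less_one) (auto simp: power_abs power_le_one)
  then have "0 < 1 - a * b^j" for j by (simp add: abs_less_iff)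
  then show ?thesis unfolding qpoch_def by (intro prod_pos) simp
qed

lemma qpoch_nonzero: "\<bar>a\<bar> < 1 \<Longrightarrow> \<bar>b\<bar> \<le> 1 \<Longrightarrow> qpoch a b n \<noteq> 0"
  using qpoch_pos by (metis less_irrefl)

lemma qpoch_self_pos: "0 \<le> p \<Longrightarrow> p < 1 \<Longrightarrow> qpoch p p n > 0"
  by (simp add: qpoch_pos)

definition euler_coeff :: "real \<Rightarrow> nat \<Rightarrow> real" where
  "euler_coeff b k = (-1)^k * b^(tri k) / qpoch b b k"

definition euler_series :: "real \<Rightarrow> real \<Rightarrow> real" where
  "euler_series b a = (\<Sum>k. euler_coeff b k * a^k)"

lemma euler_coeff_0[simp]: "euler_coeff b 0 = 1" by (simp add: euler_coeff_def)

lemma euler_coeff_Suc_mult: assumes "\<bar>b\<bar> < 1"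
  shows "euler_coeff b (Suc k) * (1 - b^Suc k) = - (euler_coeff b k * b^k)"
proof -
  have "\<bar>b^Suc k\<bar> < 1" using assms by (rule abs_power_less_one) simp
  then have "1 - b^Suc k \<noteq> 0" by auto
  then show ?thesis using qpoch_nonzero[of b b k] assms
    by (simp add: euler_coeff_def qpoch_Suc power_add field_simps)
qed

lemma euler_coeff_Suc: assumes "\<bar>b\<bar> < 1"
  shows "euler_coeff b (Suc k) = - (euler_coeff b k * b^k) / (1 - b^Suc k)"
proof -
  have "\<bar>b^Suc k\<bar> < 1" using assms by (rule abs_power_less_one) simp
  then have "1 - b^Suc k \<noteq> 0" by auto
  then show ?thesis using euler_coeff_Suc_mult[OF assms, of k] by (simp add: field_simps)
qed

lemma summable_abs_euler_series: assumes b: "\<bar>b\<bar> < 1"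
  shows "summable (\<lambda>k. \<bar>euler_coeff b k * a^k\<bar>)"
proof -
  have b0: "0 < 1 - \<bar>b\<bar>" using b by simp
  have "(\<lambda>k. \<bar>a\<bar> * \<bar>b\<bar>^k) \<longlonglongrightarrow> 0"
    using b by (intro tendsto_mult_right_zero LIMSEQ_power_zero) simp
  then have "eventually (\<lambda>k. \<bar>a\<bar> * \<bar>b\<bar>^k < (1 - \<bar>b\<bar>)/2) sequentially"
    using b0 by (intro order_tendstoD(2)) auto
  then obtain N where N: "\<And>k. k \<ge> N \<Longrightarrow> \<bar>a\<bar> * \<bar>b\<bar>^k < (1 - \<bar>b\<bar>)/2"
    unfolding eventually_sequentially by blast
  show ?thesis
  proof (rule summable_ratio_test[of "1/2" N])
    fix k assume k: "k \<ge> N"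
    have "\<bar>b\<bar>^k \<le> 1" using b by (intro power_le_one) auto
    then have "\<bar>b\<bar> * \<bar>b\<bar>^k \<le> \<bar>b\<bar>" by (simp add: mult_left_le)
    then have "\<bar>b^Suc k\<bar> \<le> \<bar>b\<bar>" by (simp add: power_abs abs_mult)
    then have d: "1 - \<bar>b\<bar> \<le> \<bar>1 - b^Suc k\<bar>" by linarith
    have "\<bar>euler_coeff b (Suc k) * a^Suc k\<bar> = \<bar>euler_coeff b k * a^k\<bar> * (\<bar>a\<bar> * \<bar>b\<bar>^k) / \<bar>1 - b^Suc k\<bar>"
      by (simp add: euler_coeff_Suc[OF b] abs_mult power_abs abs_divide)
    also have "\<dots> \<le> \<bar>euler_coeff b k * a^k\<bar> * (\<bar>a\<bar> * \<bar>b\<bar>^k) / (1 - \<bar>b\<bar>)"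
      using d b0 by (intro divide_left_mono) auto
    also have "\<dots> \<le> \<bar>euler_coeff b k * a^k\<bar> * ((1 - \<bar>b\<bar>)/2) / (1 - \<bar>b\<bar>)"
      using N[OF k] b0 by (intro divide_right_mono mult_left_mono) auto
    also have "\<dots> = 1/2 * \<bar>euler_coeff b k * a^k\<bar>" using b0 by (simp add: field_simps)
    finally show "norm \<bar>euler_coeff b (Suc k) * a ^ Suc k\<bar> \<le> 1/2 * norm \<bar>euler_coeff b k * a ^ k\<bar>" by simp
  qed (simp add: divide_simps)
qed

lemma summable_euler_series: "\<bar>b\<bar> < 1 \<Longrightarrow> summable (\<lambda>k. euler_coeff b k * a^k)"
  by (rule summable_rabs_cancel[OF summable_abs_euler_series])

lemma euler_series_sums: "\<bar>b\<bar> < 1 \<Longrightarrow> (\<lambda>k. euler_coeff b k * a^k) sums euler_series b a"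
  unfolding euler_series_def by (rule summable_sums[OF summable_euler_series])

lemma euler_series_has_sum: "\<bar>b\<bar> < 1 \<Longrightarrow> ((\<lambda>k. euler_coeff b k * a^k) has_sum euler_series b a) UNIV"
  by (rule norm_summable_imp_has_sum) (simp_all add: summable_abs_euler_series euler_series_sums)

lemma euler_series_functional_eq: assumes b: "\<bar>b\<bar> < 1"
  shows "euler_series b a = (1 - a) * euler_series b (a*b)"
proof -
  define h where "h k = euler_coeff b k * a^k * (1 - b^k)" for k
  have "(\<lambda>k. euler_coeff b k * a^k - euler_coeff b k * (a*b)^k) sums (euler_series b a - euler_series b (a*b))"
    using euler_series_sums[OF b] by (intro sums_diff) auto
  moreover have "(\<lambda>k. euler_coeff b k * a^k - euler_coeff b k * (a*b)^k) = h"
    by (auto simp: h_def power_mult_distrib algebra_simps)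
  ultimately have hs: "h sums (euler_series b a - euler_series b (a*b))" by simp
  have "(\<lambda>k. h (Suc k)) = (\<lambda>k. - a * (euler_coeff b k * (a*b)^k))"
  proof
    fix k
    have "h (Suc k) = (euler_coeff b (Suc k) * (1 - b^Suc k)) * a^Suc k" by (simp add: h_def)
    also have "\<dots> = -(euler_coeff b k * b^k) * a^Suc k" by (simp only: euler_coeff_Suc_mult[OF b])
    also have "\<dots> = - a * (euler_coeff b k * (a*b)^k)" by (simp add: power_mult_distrib)
    finally show "h (Suc k) = - a * (euler_coeff b k * (a*b)^k)" .
  qed
  moreover have "(\<lambda>k. - a * (euler_coeff b k * (a*b)^k)) sums (- a * euler_series b (a*b))"
    using euler_series_sums[OF b] by (intro sums_mult)
  ultimately have "(\<lambda>k. h (Suc k)) sums (- a * euler_series b (a*b))" by simp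
  then have "h sums (- a * euler_series b (a*b) + h 0)" by (simp add: sums_Suc_iff)
  then have "euler_series b a - euler_series b (a*b) = - a * euler_series b (a*b)" using hs sums_unique2 by (simp add: h_def)
  then show ?thesis by (simp add: algebra_simps)
qed

lemma euler_series_eq_qpoch_mult: assumes b: "\<bar>b\<bar> < 1"
  shows "euler_series b a = qpoch a b N * euler_series b (a * b^N)"
proof (induction N)
  case 0 then show ?case by simp
next
  case (Suc N)
  have "euler_series b (a*b^N) = (1 - a*b^N) * euler_series b (a*b^N*b)" by (rule euler_series_functional_eq[OF b])
  moreover have "a*b^N*b = a * b^Suc N" by (simp add: power_Suc2 mult.assoc)
  ultimately have "euler_series b (a*b^N) = (1 - a*b^N) * euler_series b (a*b^Suc N)" by metis
  then show ?case using Suc by (simp only: qpoch_Suc mult.assoc)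
qed

lemma euler_series_minus_1_bound: assumes b: "\<bar>b\<bar> < 1" and z: "\<bar>z\<bar> \<le> 1"
  shows "\<bar>euler_series b z - 1\<bar> \<le> \<bar>z\<bar> * (\<Sum>k. \<bar>euler_coeff b (Suc k)\<bar>)"
proof -
  have s1: "summable (\<lambda>k. \<bar>euler_coeff b (Suc k) * z^Suc k\<bar>)"
    using summable_abs_euler_series[OF b, of z] by (subst summable_Suc_iff)
  have s2: "summable (\<lambda>k. \<bar>euler_coeff b (Suc k)\<bar>)"
    using summable_abs_euler_series[OF b, of 1] by (subst summable_Suc_iff[where f="\<lambda>k. \<bar>euler_coeff b k\<bar>"]) simp
  have "euler_series b z - 1 = (\<Sum>k. euler_coeff b (Suc k) * z^Suc k)"
    using suminf_split_head[OF summable_euler_series[OF b, of z]] by (simp add: euler_series_def)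
  then have "\<bar>euler_series b z - 1\<bar> \<le> (\<Sum>k. \<bar>euler_coeff b (Suc k) * z^Suc k\<bar>)"
    using summable_rabs[OF s1] by simp
  also have "\<dots> \<le> (\<Sum>k. \<bar>z\<bar> * \<bar>euler_coeff b (Suc k)\<bar>)"
  proof (rule suminf_le[OF _ s1 summable_mult[OF s2]])
    fix k
    have "\<bar>z\<bar>^k \<le> 1" using z by (intro power_le_one) auto
    then have "\<bar>z\<bar> * \<bar>z\<bar>^k \<le> \<bar>z\<bar>" by (simp add: mult_left_le)
    then have "\<bar>euler_coeff b (Suc k)\<bar> * (\<bar>z\<bar> * \<bar>z\<bar>^k) \<le> \<bar>euler_coeff b (Suc k)\<bar> * \<bar>z\<bar>"
      by (intro mult_left_mono) auto
    then show "\<bar>euler_coeff b (Suc k) * z^Suc k\<bar> \<le> \<bar>z\<bar> * \<bar>euler_coeff b (Suc k)\<bar>"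
      by (simp add: abs_mult power_abs mult.commute)
  qed
  also have "\<dots> = \<bar>z\<bar> * (\<Sum>k. \<bar>euler_coeff b (Suc k)\<bar>)" by (rule suminf_mult[OF s2])
  finally show ?thesis .
qed

lemma euler_series_tendsto_1: assumes b: "\<bar>b\<bar> < 1"
  shows "(\<lambda>N. euler_series b (a * b^N)) \<longlonglongrightarrow> 1"
proof -
  define M where "M = (\<Sum>k. \<bar>euler_coeff b (Suc k)\<bar>)"
  have z0: "(\<lambda>N. \<bar>a * b^N\<bar>) \<longlonglongrightarrow> 0"
    using b by (simp add: abs_mult power_abs) (intro tendsto_mult_right_zero LIMSEQ_power_zero, simp)
  then have ev: "eventually (\<lambda>N. \<bar>a * b^N\<bar> < 1) sequentially"
    by (intro order_tendstoD(2)) auto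
  have "(\<lambda>N. euler_series b (a * b^N) - 1) \<longlonglongrightarrow> 0"
  proof (rule Lim_null_comparison)
    show "eventually (\<lambda>N. norm (euler_series b (a * b^N) - 1) \<le> \<bar>a * b^N\<bar> * M) sequentially"
      using ev by eventually_elim (use euler_series_minus_1_bound[OF b] in \<open>auto simp: M_def\<close>)
    show "(\<lambda>N. \<bar>a * b^N\<bar> * M) \<longlonglongrightarrow> 0"
      using z0 by (rule tendsto_mult_left_zero)
  qed
  then show ?thesis by (rule LIM_zero_cancel)
qed

text \<open>Iterating the functional equation gives euler_series b a = (a; b)_N * euler_series b (a b^N),
  and the last factor tends to 1.\<close>

lemma qpoch_inf_eq_euler_series: assumes b: "\<bar>b\<bar> < 1" and nz: "\<And>j. a * b^j \<noteq> 1"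
  shows "qpoch_inf a b = euler_series b a"
proof -
  have qpnz: "qpoch a b N \<noteq> 0" for N using nz by (simp add: qpoch_def)
  have t1: "(\<lambda>N. euler_series b (a * b^N)) \<longlonglongrightarrow> 1" by (rule euler_series_tendsto_1[OF b])
  then have "eventually (\<lambda>N. euler_series b (a * b^N) \<noteq> 0) sequentially"
    by (rule tendsto_imp_eventually_ne) simp
  then obtain N where "euler_series b (a * b^N) \<noteq> 0" by (auto simp: eventually_sequentially)
  then have Enz: "euler_series b a \<noteq> 0" using euler_series_eq_qpoch_mult[OF b, of a N] qpnz[of N] by simp
  have "(\<lambda>N. euler_series b a / euler_series b (a * b^N)) \<longlonglongrightarrow> euler_series b a / 1"
    by (intro tendsto_divide tendsto_const t1) simp
  then have "(\<lambda>N. euler_series b a / euler_series b (a * b^N)) \<longlonglongrightarrow> euler_series b a" by simp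
  moreover have "eventually (\<lambda>N. euler_series b a / euler_series b (a * b^N) = qpoch a b N) sequentially"
  proof (rule eventuallyI)
    fix N show "euler_series b a / euler_series b (a * b^N) = qpoch a b N"
    proof (cases "euler_series b (a * b^N) = 0")
      case True then show ?thesis using euler_series_eq_qpoch_mult[OF b, of a N] qpnz[of N] Enz by simp
    next
      case False then show ?thesis using euler_series_eq_qpoch_mult[OF b, of a N] by (simp add: field_simps)
    qed
  qed
  ultimately have "qpoch a b \<longlonglongrightarrow> euler_series b a" by (rule Lim_transform_eventually)
  then have "(\<lambda>n. qpoch a b (Suc n)) \<longlonglongrightarrow> euler_series b a" by (rule LIMSEQ_Suc)
  moreover have "(\<lambda>n. \<Prod>i\<le>n. 1 - a * b^(i+0)) = (\<lambda>n. qpoch a b (Suc n))"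
    by (simp add: qpoch_def lessThan_Suc_atMost)
  ultimately have "raw_has_prod (\<lambda>j. 1 - a * b^j) 0 (euler_series b a)"
    using Enz by (simp add: raw_has_prod_def)
  then have "(\<lambda>j. 1 - a * b^j) has_prod (euler_series b a)" by (simp add: has_prod_def)
  then show ?thesis unfolding qpoch_inf_def by (rule has_prod_unique[symmetric])
qed

fun qbinom :: "real \<Rightarrow> nat \<Rightarrow> nat \<Rightarrow> real" where
  "qbinom p 0 m = (if m = 0 then 1 else 0)"
| "qbinom p (Suc d) m = qbinom p d m + (if m = 0 then 0 else p^(Suc d - m) * qbinom p d (m-1))"

lemma qbinom_eq_0: "d < m \<Longrightarrow> qbinom p d m = 0"
  by (induction d arbitrary: m) auto

lemma qbinom_0_right: "qbinom p d 0 = 1"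
  by (induction d) auto

lemma qbinom_diag: "qbinom p d d = 1"
  by (induction d) (auto simp: qbinom_eq_0)

lemma qpoch_qbinom_expansion: "qpoch u p d = (\<Sum>m\<le>d. (-u)^m * p^(tri m) * qbinom p d m)"
proof (induction d)
  case 0 then show ?case by simp
next
  case (Suc d)
  define c where "c m = (-u)^m * p^(tri m)" for m
  have "(\<Sum>m\<le>Suc d. c m * qbinom p (Suc d) m)
      = (\<Sum>m\<le>Suc d. c m * qbinom p d m) + (\<Sum>m\<le>Suc d. c m * (if m = 0 then 0 else p^(Suc d - m) * qbinom p d (m-1)))"
    by (simp add: sum.distrib algebra_simps)
  also have "(\<Sum>m\<le>Suc d. c m * qbinom p d m) = (\<Sum>m\<le>d. c m * qbinom p d m)"
    by (simp add: qbinom_eq_0)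
  also have "(\<Sum>m\<le>Suc d. c m * (if m = 0 then 0 else p^(Suc d - m) * qbinom p d (m-1)))
      = (\<Sum>k\<le>d. c (Suc k) * (p^(Suc d - Suc k) * qbinom p d k))"
    by (subst sum.atMost_Suc_shift) simp
  also have "\<dots> = (\<Sum>k\<le>d. - u * p^d * (c k * qbinom p d k))"
  proof (rule sum.cong[OF refl])
    fix k assume "k \<in> {..d}"
    then have "p^k * p^(d-k) = p^d" by (metis le_add_diff_inverse power_add atMost_iff)
    then show "c (Suc k) * (p^(Suc d - Suc k) * qbinom p d k) = - u * p^d * (c k * qbinom p d k)"
      unfolding c_def by (simp add: power_add mult.assoc[symmetric])
  qed
  also have "\<dots> = - u * p^d * (\<Sum>k\<le>d. c k * qbinom p d k)" by (simp add: sum_distrib_left)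
  finally have "(\<Sum>m\<le>Suc d. c m * qbinom p (Suc d) m) = (\<Sum>m\<le>d. c m * qbinom p d m) * (1 - u * p^d)"
    by (simp add: algebra_simps)
  then show ?case using Suc by (simp add: qpoch_Suc c_def)
qed

lemma qbinom_mult_qpoch: "m \<le> d \<Longrightarrow> qbinom p d m * (qpoch p p m * qpoch p p (d-m)) = qpoch p p d"
proof (induction d arbitrary: m)
  case 0 then show ?case by simp
next
  case (Suc d)
  show ?case
  proof (cases "m = 0")
    case True then show ?thesis by (simp add: qbinom_0_right)
  next
    case False
    show ?thesis
    proof (cases "m = Suc d")
      case True then show ?thesis by (simp add: qbinom_diag qbinom_eq_0)
    next
      case False
      obtain k where k: "m = Suc k" using \<open>m \<noteq> 0\<close> by (cases m) auto
      define n where "n = d - Suc k"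
      have n: "d = Suc k + n" using k Suc.prems False by (simp add: n_def)
      have I1: "qbinom p d m * (qpoch p p m * qpoch p p n) = qpoch p p d"
        using Suc.IH[of m] n k by simp
      have I2: "qbinom p d k * (qpoch p p k * qpoch p p (Suc n)) = qpoch p p d"
        using Suc.IH[of k] n k by simp
      have "qbinom p (Suc d) m * (qpoch p p m * qpoch p p (Suc d - m))
          = qbinom p d m * (qpoch p p m * qpoch p p n) * (1 - p * p^n)
            + p^(Suc n) * (qbinom p d k * (qpoch p p k * qpoch p p (Suc n))) * (1 - p * p^k)"
      proof -
        have "Suc d - m = Suc n" "m - 1 = k" using k n by auto
        then show ?thesis using k by (simp add: qpoch_Suc algebra_simps)
      qed
      also have "\<dots> = qpoch p p d * (1 - p * p^n) + p^(Suc n) * qpoch p p d * (1 - p * p^k)"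
        by (simp only: I1 I2)
      also have "\<dots> = qpoch p p d * ((1 - p * p^n) + p^(Suc n) * (1 - p * p^k))"
        by (simp add: algebra_simps)
      also have "\<dots> = qpoch p p d * (1 - p * p^d)"
        using n by (simp add: algebra_simps power_add)
      finally show ?thesis by (simp add: qpoch_Suc)
    qed
  qed
qed

lemma double_tri_add: "2 * tri e + e = e * e"
  by (induction e) (auto simp: algebra_simps)

text \<open>The (m, e) term of \<Sum>_d q^(d^2) r^d (u; q^2)_d / (q^2; q^2)_d after expanding (u; q^2)_d, where d = m + e.\<close>

definition dterm :: "real \<Rightarrow> real \<Rightarrow> real \<Rightarrow> nat \<times> nat \<Rightarrow> real" where
  "dterm q r u = (\<lambda>(m,e). q^((m+e)*(m+e)) * r^(m+e) * (-u)^m * q^(2*tri m)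
                 / (qpoch (q^2) (q^2) m * qpoch (q^2) (q^2) e))"

definition dterm_row :: "real \<Rightarrow> real \<Rightarrow> real \<Rightarrow> nat \<Rightarrow> real" where
  "dterm_row q r u m = (-u)^m * q^(2*tri m + m*m) * r^m * euler_series (q^2) (-(q*(q^2)^m*r)) / qpoch (q^2) (q^2) m"

lemma dterm_antidiagonal_sum: assumes q: "\<bar>q\<bar> < 1"
  shows "(\<Sum>m\<le>d. dterm q r u (m, d-m)) = q^(d*d) * r^d * qpoch u (q^2) d / qpoch (q^2) (q^2) d"
proof -
  define p where "p = q^2"
  have p: "0 \<le> p" "p < 1" using q by (auto simp: p_def abs_square_less_1)
  have nz: "qpoch p p n \<noteq> 0" for n using qpoch_self_pos[OF p] by (metis less_irrefl)
  have "(\<Sum>m\<le>d. dterm q r u (m, d-m)) = (\<Sum>m\<le>d. q^(d*d) * r^d / qpoch p p d * ((-u)^m * p^(tri m) * qbinom p d m))"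
  proof (rule sum.cong[OF refl])
    fix m assume "m \<in> {..d}"
    then have md: "m \<le> d" by simp
    have g: "qbinom p d m * (qpoch p p m * qpoch p p (d-m)) = qpoch p p d" by (rule qbinom_mult_qpoch[OF md])
    have e: "m + (d - m) = d" using md by simp
    define A where "A = q^(d*d) * r^d * (-u)^m * p^(tri m)"
    define X where "X = qpoch p p m * qpoch p p (d-m)"
    have gnz: "qbinom p d m \<noteq> 0" using g nz[of d] unfolding X_def by auto
    have "dterm q r u (m, d-m) = A / X"
      unfolding dterm_def A_def X_def using e by (simp add: p_def power_mult)
    also have "\<dots> = A * qbinom p d m / (qbinom p d m * X)" using gnz by simp
    also have "\<dots> = A * qbinom p d m / qpoch p p d" using g unfolding X_def by simp
    finally show "dterm q r u (m, d-m) = q^(d*d) * r^d / qpoch p p d * ((-u)^m * p^(tri m) * qbinom p d m)"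
      unfolding A_def by simp
  qed
  also have "\<dots> = q^(d*d) * r^d / qpoch p p d * qpoch u p d" by (simp add: qpoch_qbinom_expansion sum_distrib_left)
  finally show ?thesis by (simp add: p_def)
qed

lemma dterm_row_has_sum: assumes q: "\<bar>q\<bar> < 1"
  shows "((\<lambda>e. dterm q r u (m,e)) has_sum dterm_row q r u m) UNIV"
proof -
  define p where "p = q^2"
  have p: "0 \<le> p" "p < 1" using q by (auto simp: p_def abs_square_less_1)
  define K where "K = (-u)^m * q^(2*tri m + m*m) * r^m / qpoch p p m"
  define a where "a = -(q*p^m*r)"
  have eq: "dterm q r u (m,e) = K * (euler_coeff p e * a^e)" for e
  proof -
    have ex: "(m+e)*(m+e) = m*m + (2*tri e + e) + 2*(m*e)" using double_tri_add[of e] by (simp add: algebra_simps)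
    have h1: "q^((m+e)*(m+e)) = q^(m*m) * p^(tri e) * q^e * p^(m*e)"
      unfolding ex p_def by (simp only: power_add power_mult)
    have h2: "a^e = (-1)^e * q^e * p^(m*e) * r^e"
    proof -
      have "a^e = (-1)^e * (q*p^m*r)^e" unfolding a_def by (rule power_minus)
      also have "(q*p^m*r)^e = q^e * p^(m*e) * r^e" by (simp add: power_mult_distrib power_mult)
      finally show ?thesis by simp
    qed
    have h3: "(-1::real)^e * (-1)^e = 1" by (simp flip: power_add)
    have r1: "K * (euler_coeff p e * a^e) = ((-u)^m * q^(2*tri m + m*m) * r^m * ((-1)^e * p^(tri e) * a^e)) / (qpoch p p m * qpoch p p e)"
      unfolding K_def euler_coeff_def by simp
    have r2: "dterm q r u (m,e) = (q^((m+e)*(m+e)) * r^(m+e) * (-u)^m * q^(2*tri m)) / (qpoch p p m * qpoch p p e)"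
      unfolding dterm_def p_def by simp
    have r3: "(-u)^m * q^(2*tri m + m*m) * r^m * ((-1)^e * p^(tri e) * a^e)
        = ((-u)^m * q^(2*tri m) * q^(m*m) * r^m * r^e * p^(tri e) * q^e * p^(m*e)) * ((-1)^e * (-1)^e)"
      unfolding h2 by (simp only: power_add mult_ac)
    have r4: "q^((m+e)*(m+e)) * r^(m+e) * (-u)^m * q^(2*tri m)
        = (-u)^m * q^(2*tri m) * q^(m*m) * r^m * r^e * p^(tri e) * q^e * p^(m*e)"
      unfolding h1 by (simp only: power_add mult_ac)
    show ?thesis unfolding r1 r2 r3 r4 h3 by simp
  qed
  have "((\<lambda>e. K * (euler_coeff p e * a^e)) has_sum K * euler_series p a) UNIV"
    using p by (intro has_sum_cmult_right euler_series_has_sum) simp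
  moreover have "K * euler_series p a = dterm_row q r u m"
    unfolding K_def a_def dterm_row_def p_def by simp
  ultimately show ?thesis using eq by simp
qed

lemma summable_square_power_div_qpoch: assumes q: "\<bar>q\<bar> < 1"
  shows "summable (\<lambda>n. \<bar>q\<bar>^(n*n) / qpoch (q^2) (q^2) n)"
proof -
  define p where "p = q^2"
  have p: "0 \<le> p" "p < 1" using q by (auto simp: p_def abs_square_less_1)
  have pos: "qpoch p p n > 0" for n using qpoch_self_pos[OF p] .
  have b0: "0 < 1 - p" using p by simp
  have "(\<lambda>n. \<bar>q\<bar>^n) \<longlonglongrightarrow> 0" using q by (intro LIMSEQ_power_zero) simp
  then have "eventually (\<lambda>n. \<bar>q\<bar>^n < (1 - p)/2) sequentially"
    using b0 by (intro order_tendstoD(2)) auto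
  then obtain N where N: "\<And>n. n \<ge> N \<Longrightarrow> \<bar>q\<bar>^n < (1 - p)/2"
    unfolding eventually_sequentially by blast
  show ?thesis unfolding p_def[symmetric]
  proof (rule summable_ratio_test[of "1/2" N])
    fix n assume n: "n \<ge> N"
    have "p * p^n \<le> p" using p by (simp add: mult_left_le power_le_one)
    then have d: "1 - p \<le> 1 - p * p^n" by linarith
    have e: "Suc n * Suc n = n*n + n + (n+1)" by simp
    have "\<bar>q\<bar>^(Suc n * Suc n) / qpoch p p (Suc n)
          = (\<bar>q\<bar>^(n*n) / qpoch p p n) * (\<bar>q\<bar>^n * \<bar>q\<bar>^(n+1) / (1 - p*p^n))"
      unfolding e power_add qpoch_Suc by simp
    also have "\<dots> \<le> (\<bar>q\<bar>^(n*n) / qpoch p p n) * ((1-p)/2 * 1 / (1 - p))"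
    proof (intro mult_left_mono frac_le mult_mono)
      show "\<bar>q\<bar>^n \<le> (1-p)/2" using N[OF n] by simp
      show "\<bar>q\<bar>^(n+1) \<le> 1" using q by (intro power_le_one) auto
    qed (use pos b0 d in \<open>auto intro: divide_nonneg_pos less_imp_le\<close>)
    also have "\<dots> = 1/2 * (\<bar>q\<bar>^(n*n) / qpoch p p n)"
    proof -
      have h: "(1-p)/2 * 1 / (1 - p) = 1/2" using b0 by simp
      show ?thesis unfolding h by simp
    qed
    finally show "norm (\<bar>q\<bar>^(Suc n * Suc n) / qpoch p p (Suc n)) \<le> 1/2 * norm (\<bar>q\<bar>^(n*n) / qpoch p p n)"
      using pos[of n] pos[of "Suc n"] by simp
  qed simp
qed

lemma abs_dterm_le:
  assumes q: "\<bar>q\<bar> < 1" and r: "\<bar>r\<bar> \<le> 1" and u: "\<bar>u\<bar> \<le> 1"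
  shows "\<bar>dterm q r u (m, e)\<bar> \<le> \<bar>q\<bar>^(m*m) / qpoch (q^2) (q^2) m * (\<bar>q\<bar>^(e*e) / qpoch (q^2) (q^2) e)"
proof -
  define P where "P = qpoch (q^2) (q^2) m * qpoch (q^2) (q^2) e"
  have pos: "0 < qpoch (q^2) (q^2) n" for n using q by (simp add: qpoch_self_pos abs_square_less_1)
  then have P: "0 < P" by (simp add: P_def)
  have "\<bar>q\<bar>^((m+e)*(m+e)) * \<bar>r\<bar>^(m+e) * \<bar>u\<bar>^m * \<bar>q\<bar>^(2*tri m) \<le> \<bar>q\<bar>^(m*m + e*e) * 1 * 1 * 1"
    using q r u by (intro mult_mono power_decreasing power_le_one) (auto simp: algebra_simps)
  then have "\<bar>q\<bar>^((m+e)*(m+e)) * \<bar>r\<bar>^(m+e) * \<bar>u\<bar>^m * \<bar>q\<bar>^(2*tri m) / P \<le> \<bar>q\<bar>^(m*m + e*e) / P"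
    using P by (intro divide_right_mono) auto
  moreover have "\<bar>dterm q r u (m, e)\<bar> = \<bar>q\<bar>^((m+e)*(m+e)) * \<bar>r\<bar>^(m+e) * \<bar>u\<bar>^m * \<bar>q\<bar>^(2*tri m) / P"
    using pos[of m] pos[of e] by (simp add: dterm_def P_def abs_mult abs_divide power_abs)
  ultimately show ?thesis by (simp add: P_def power_add)
qed

lemma dterm_summable:
  assumes q: "\<bar>q\<bar> < 1" and r: "\<bar>r\<bar> \<le> 1" and u: "\<bar>u\<bar> \<le> 1"
  shows "dterm q r u summable_on UNIV"
proof -
  define a where "a n = \<bar>q\<bar>^(n*n) / qpoch (q^2) (q^2) n" for n
  have a0: "a n \<ge> 0" for n using q by (simp add: a_def qpoch_self_pos abs_square_less_1 less_imp_le)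
  have "summable a" unfolding a_def by (rule summable_square_power_div_qpoch[OF q])
  then have "a summable_on UNIV" using a0 by (simp add: summable_on_UNIV_nonneg_real_iff)
  then obtain A where "(a has_sum A) UNIV" by (auto simp: summable_on_def)
  then have "(\<lambda>z. a (fst z) * a (snd z)) summable_on (SIGMA m:UNIV. UNIV)"
    using \<open>a summable_on UNIV\<close> a0
    by (intro summable_on_SigmaI[where g="\<lambda>m. a m * A"] summable_on_cmult_left)
      (auto intro: has_sum_cmult_right)
  then have "(\<lambda>z. norm (dterm q r u z)) summable_on UNIV"
    using abs_dterm_le[OF q r u] unfolding a_def
    by (intro Infinite_Sum.abs_summable_on_comparison_test') auto
  then show ?thesis by (rule Infinite_Sum.abs_summable_summable)
qed

lemma has_sum_dterm_antidiagonals: assumes q: "\<bar>q\<bar> < 1" and r: "\<bar>r\<bar> \<le> 1" and u: "\<bar>u\<bar> \<le> 1"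
  shows "((\<lambda>d. q^(d*d) * r^d * qpoch u (q^2) d / qpoch (q^2) (q^2) d) has_sum infsum (dterm q r u) UNIV) UNIV"
proof -
  have hT: "(dterm q r u has_sum infsum (dterm q r u) UNIV) UNIV"
    using dterm_summable[OF q r u] by (simp add: summable_iff_has_sum_infsum)
  have "((\<lambda>z. dterm q r u (snd z, fst z - snd z)) has_sum infsum (dterm q r u) UNIV) (SIGMA d:UNIV. {..d})
      = (dterm q r u has_sum infsum (dterm q r u) UNIV) UNIV"
    by (rule has_sum_reindex_bij_witness[where i="\<lambda>z. (fst z + snd z, fst z)" and j="\<lambda>z. (snd z, fst z - snd z)"])
      auto
  with hT have hS: "((\<lambda>z. dterm q r u (snd z, fst z - snd z)) has_sum infsum (dterm q r u) UNIV) (SIGMA d:UNIV. {..d})"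
    by simp
  show ?thesis
  proof (rule has_sum_Sigma'[OF hS])
    fix d :: nat
    have "((\<lambda>m. dterm q r u (m, d - m)) has_sum (\<Sum>m\<le>d. dterm q r u (m, d-m))) {..d}"
      by (rule has_sum_finite) simp
    then show "((\<lambda>m. dterm q r u (snd (d, m), fst (d, m) - snd (d, m))) has_sum
        q^(d*d) * r^d * qpoch u (q^2) d / qpoch (q^2) (q^2) d) {..d}"
      by (simp add: dterm_antidiagonal_sum[OF q])
  qed
qed

lemma has_sum_dterm_rows: assumes q: "\<bar>q\<bar> < 1" and r: "\<bar>r\<bar> \<le> 1" and u: "\<bar>u\<bar> \<le> 1"
  shows "(dterm_row q r u has_sum infsum (dterm q r u) UNIV) UNIV"
proof -
  have hT: "(dterm q r u has_sum infsum (dterm q r u) UNIV) (SIGMA m:UNIV. UNIV)"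
    using dterm_summable[OF q r u] by (simp add: summable_iff_has_sum_infsum)
  show ?thesis
    by (rule has_sum_Sigma'[OF hT]) (use dterm_row_has_sum[OF q] in simp)
qed

lemma tri_even: "tri (2*m) = 2*tri m + m*m"
  by (induction m) (auto simp: algebra_simps)

lemma tri_odd: "tri (Suc (2*m)) = tri (2*m) + 2*m"
  by simp

lemma qpoch_neg_double: "qpoch (-q) (-q) (2*m) = qpoch (-q) (q^2) m * qpoch (q^2) (q^2) m"
proof (induction m)
  case 0 then show ?case by simp
next
  case (Suc m)
  have e: "2 * Suc m = Suc (Suc (2*m))" by simp
  have "(-q)^(2*m) = (q^2)^m" by (simp add: power_mult)
  moreover have "(-q)^(Suc (2*m)) = - (q * (q^2)^m)" by (simp add: power_mult)
  ultimately show ?case unfolding e using Suc by (simp add: qpoch_Suc algebra_simps power2_eq_square)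
qed

lemma neg_one_power_tri_even: "(-1::real)^(tri (2*m)) = (-1)^m"
proof -
  have "(-1::real)^(tri (2*m)) = (-1)^(m*m)"
    unfolding tri_even by (simp add: power_add power_mult)
  also have "\<dots> = (-1)^m" by (cases "even m") (auto simp: power_mult)
  finally show ?thesis .
qed

lemma neg_power_tri_even: "(-q::real)^(tri (2*m)) = (-1)^m * q^(2*tri m + m*m)"
proof -
  have "(-q)^(tri (2*m)) = (-1)^(tri (2*m)) * q^(tri (2*m))" by (rule power_minus)
  also have "\<dots> = (-1)^m * q^(tri (2*m))" by (simp only: neg_one_power_tri_even)
  finally show ?thesis by (simp only: tri_even)
qed

lemma euler_coeff_neg_even: "euler_coeff (-q) (2*m) = (-1)^m * q^(2*tri m + m*m) / (qpoch (-q) (q^2) m * qpoch (q^2) (q^2) m)"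
  unfolding euler_coeff_def by (simp add: neg_power_tri_even qpoch_neg_double)

lemma euler_coeff_neg_odd: "euler_coeff (-q) (Suc (2*m)) = - ((-1)^m * q^(2*tri m + m*m) * (q^2)^m
                 / (qpoch (-q) (q^2) (Suc m) * qpoch (q^2) (q^2) m))"
proof -
  have "(-q)^(tri (Suc (2*m))) = (-1)^m * q^(2*tri m + m*m) * (q^2)^m"
    unfolding tri_odd power_add neg_power_tri_even by (simp add: power_mult)
  moreover have "qpoch (-q) (-q) (Suc (2*m)) = qpoch (-q) (q^2) (Suc m) * qpoch (q^2) (q^2) m"
    by (simp add: qpoch_Suc qpoch_neg_double power_mult)
  ultimately show ?thesis unfolding euler_coeff_def by simp
qed

lemma euler_series_pair_sums:
  fixes q s t :: real
  assumes q: "\<bar>q\<bar> < 1"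
  shows "(\<lambda>m. 2 * ((euler_coeff (-q) (2*m) + s * t * euler_coeff (-q) (Suc (2*m))) * (s^2)^m))
           sums ((1 - t) * euler_series (-q) (-s) + (1 + t) * euler_series (-q) s)"
proof -
  have q': "\<bar>-q\<bar> < 1" using q by simp
  define g where "g k = euler_coeff (-q) k * ((1 - t) * (-s)^k + (1 + t) * s^k)" for k
  have "(\<lambda>k. (1 - t) * (euler_coeff (-q) k * (-s)^k) + (1 + t) * (euler_coeff (-q) k * s^k))
          sums ((1 - t) * euler_series (-q) (-s) + (1 + t) * euler_series (-q) s)"
    by (intro sums_add sums_mult euler_series_sums[OF q'])
  moreover have "(\<lambda>k. (1 - t) * (euler_coeff (-q) k * (-s)^k) + (1 + t) * (euler_coeff (-q) k * s^k)) = g"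
    by (auto simp: g_def algebra_simps)
  ultimately have "g sums ((1 - t) * euler_series (-q) (-s) + (1 + t) * euler_series (-q) s)" by simp
  then have "(\<lambda>n. sum g {n*2..<n*2+2}) sums ((1 - t) * euler_series (-q) (-s) + (1 + t) * euler_series (-q) s)"
    by (rule sums_group) simp
  moreover have "sum g {n*2..<n*2+2} = 2 * ((euler_coeff (-q) (2*n) + s * t * euler_coeff (-q) (Suc (2*n))) * (s^2)^n)" for n
  proof -
    have "{n*2..<n*2+2} = {2*n, Suc (2*n)}" by auto
    then have "sum g {n*2..<n*2+2} = g (2*n) + g (Suc (2*n))" by simp
    moreover have "g (2*n) = 2 * euler_coeff (-q) (2*n) * (s^2)^n"
    proof -
      have f1: "(-s)^(2*n) = (s^2)^n" "s^(2*n) = (s^2)^n" by (simp_all add: power_mult)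
      show ?thesis unfolding g_def f1 by (simp add: algebra_simps)
    qed
    moreover have "g (Suc (2*n)) = 2 * (s * t) * euler_coeff (-q) (Suc (2*n)) * (s^2)^n"
    proof -
      have f1: "(-s)^(Suc (2*n)) = - s * (s^2)^n" by (simp only: power_Suc power_mult) simp
      have f2: "s^(Suc (2*n)) = s * (s^2)^n" by (simp only: power_Suc power_mult)
      show ?thesis unfolding g_def f1 f2 by (simp add: algebra_simps)
    qed
    ultimately show ?thesis by (simp add: algebra_simps)
  qed
  ultimately show ?thesis by simp
qed

lemma dterm_row_combination:
  fixes x q u :: real
  assumes x: "x \<noteq> 0" and q: "\<bar>q\<bar> < 1"
  shows "(1 - 1/x) * dterm_row q (q^2) u m + (1/x) * dterm_row q 1 u m
       = euler_series (q^2) (-q) / x * ((euler_coeff (-q) (2*m) + (1 - x) * euler_coeff (-q) (Suc (2*m))) * u^m)"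
proof -
  define p where "p = q^2"
  have p: "0 \<le> p" "p < 1" using q by (auto simp: p_def abs_square_less_1)
  have p': "\<bar>p\<bar> < 1" using p by simp
  define W where "W = euler_series p (-q * p^Suc m)"
  define P0 where "P0 = qpoch p p m"
  define Qm where "Qm = qpoch (-q) p m"
  define Z where "Z = q^(2*tri m + m*m)"
  have P0: "P0 \<noteq> 0" unfolding P0_def using qpoch_self_pos[OF p] by (metis less_irrefl)
  define F where "F = 1 + q * p^m"
  have "Qm * F \<noteq> 0"
    using qpoch_nonzero[of "-q" p "Suc m"] q p by (simp add: qpoch_Suc Qm_def F_def)
  then have Qm: "Qm \<noteq> 0" and F: "F \<noteq> 0" by auto
  have row_p: "dterm_row q p u m = (-u)^m * Z * p^m * W / P0"
    unfolding dterm_row_def Z_def P0_def W_def p_def by (simp add: algebra_simps)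
  have "euler_series p (-(q * p^m)) = F * W"
    using euler_series_functional_eq[OF p', of "-(q * p^m)"] by (simp add: W_def F_def algebra_simps)
  then have row_1: "dterm_row q 1 u m = (-u)^m * Z * (F * W) / P0"
    unfolding dterm_row_def Z_def P0_def p_def by simp
  have E: "euler_series p (-q) = Qm * F * W"
    using euler_series_eq_qpoch_mult[OF p', of "-q" "Suc m"] unfolding W_def Qm_def F_def by (simp add: qpoch_Suc)
  have even: "euler_coeff (-q) (2*m) = (-1)^m * Z / (Qm * P0)"
    unfolding euler_coeff_neg_even Z_def Qm_def P0_def p_def ..
  have odd: "euler_coeff (-q) (Suc (2*m)) = - ((-1)^m * Z * p^m / (Qm * F * P0))"
    unfolding euler_coeff_neg_odd Z_def Qm_def P0_def F_def p_def by (simp add: qpoch_Suc algebra_simps)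
  show ?thesis
    unfolding p_def[symmetric] row_p row_1 E even odd power_minus[of u m]
    using x P0 Qm F by (simp add: field_simps)
qed

definition arm_gf :: "real \<Rightarrow> real \<Rightarrow> nat \<Rightarrow> real" where
  "arm_gf x p d = (p^d + (1 - p^d) / x) * (qpoch (1 - x^2) p d / qpoch p p d)"

lemma has_sum_arm_gf_dterm:
  fixes x q :: real
  assumes x: "0 < x" "x \<le> 1" and q: "\<bar>q\<bar> < 1"
  shows "((\<lambda>d. q^(d*d) * arm_gf x (q^2) d) has_sum
           (1 - 1/x) * infsum (dterm q (q^2) (1 - x^2)) UNIV + (1/x) * infsum (dterm q 1 (1 - x^2)) UNIV) UNIV"
proof -
  define u where "u = 1 - x^2"
  define p where "p = q^2"
  have p: "0 \<le> p" "p < 1" using q by (auto simp: p_def abs_square_less_1)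
  have u: "\<bar>u\<bar> \<le> 1" using x by (simp add: u_def abs_le_iff power_le_one)
  have "((\<lambda>d. (1 - 1/x) * (q^(d*d) * p^d * qpoch u p d / qpoch p p d)
              + (1/x) * (q^(d*d) * 1^d * qpoch u p d / qpoch p p d)) has_sum
          (1 - 1/x) * infsum (dterm q p u) UNIV + (1/x) * infsum (dterm q 1 u) UNIV) UNIV"
    using p u unfolding p_def
    by (intro has_sum_add has_sum_cmult_right has_sum_dterm_antidiagonals[OF q]) auto
  moreover have "(1 - 1/x) * (q^(d*d) * p^d * qpoch u p d / qpoch p p d)
      + (1/x) * (q^(d*d) * 1^d * qpoch u p d / qpoch p p d) = q^(d*d) * arm_gf x p d" for d
    using x qpoch_self_pos[OF p, of d] by (simp add: arm_gf_def u_def field_simps)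
  ultimately show ?thesis by (simp add: u_def p_def)
qed

lemma dterm_rows_sums:
  fixes x q s t :: real
  assumes x: "0 < x" "x < 1" and q: "\<bar>q\<bar> < 1"
    and s: "s = sqrt (1 - x^2)" and t: "t = sqrt ((1 - x) / (1 + x))"
  shows "(\<lambda>m. (1 - 1/x) * dterm_row q (q^2) (1 - x^2) m + (1/x) * dterm_row q 1 (1 - x^2) m)
           sums (euler_series (q^2) (-q) / (2*x) * ((1 - t) * euler_series (-q) (-s) + (1 + t) * euler_series (-q) s))"
proof -
  have "(1 - x^2) * ((1 - x) / (1 + x)) = (1 - x)^2"
    using x by (simp add: field_simps power2_eq_square)
  then have st: "s * t = 1 - x"
    using x unfolding s t by (simp add: real_sqrt_mult[symmetric])
  have s2: "s^2 = 1 - x^2"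
    using x unfolding s by (simp add: abs_square_le_1 less_imp_le)
  have "(1 - 1/x) * dterm_row q (q^2) (1 - x^2) m + (1/x) * dterm_row q 1 (1 - x^2) m
      = euler_series (q^2) (-q) / (2*x) *
          (2 * ((euler_coeff (-q) (2*m) + s * t * euler_coeff (-q) (Suc (2*m))) * (s^2)^m))" for m
    using dterm_row_combination[OF _ q, of x "1 - x^2" m] x by (simp add: st s2)
  then show ?thesis
    using sums_mult[OF euler_series_pair_sums[OF q, of s t], of "euler_series (q^2) (-q) / (2*x)"] by simp
qed

lemma qpoch_inf_eq_euler_series_small:
  assumes "\<bar>a\<bar> < 1" "\<bar>b\<bar> < 1"
  shows "qpoch_inf a b = euler_series b a"
proof (rule qpoch_inf_eq_euler_series)
  fix j
  have "\<bar>a * b^j\<bar> < 1" using assms by (intro abs_mult_less_one) (auto simp: power_abs power_le_one)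
  then show "a * b^j \<noteq> 1" by auto
qed (use assms in simp)

lemma has_sum_arm_gf_series:
  fixes x q :: real
  assumes x: "0 < x" "x < 1" and q: "\<bar>q\<bar> < 1"
  defines "s \<equiv> sqrt (1 - x\<^sup>2)"
  shows "((\<lambda>d. q^(d*d) * arm_gf x (q^2) d) has_sum
           (qpoch_inf (-q) (q\<^sup>2) / (2 * x) *
             ((1 - sqrt ((1 - x) / (1 + x))) * qpoch_inf (-s) (-q)
              + (1 + sqrt ((1 - x) / (1 + x))) * qpoch_inf s (-q)))) UNIV"
proof -
  define L where "L = (1 - 1/x) * infsum (dterm q (q^2) (1 - x^2)) UNIV + (1/x) * infsum (dterm q 1 (1 - x^2)) UNIV"
  have u: "\<bar>1 - x^2\<bar> \<le> 1" using x by (simp add: abs_le_iff power_le_one)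
  have "((\<lambda>m. (1 - 1/x) * dterm_row q (q^2) (1 - x^2) m + (1/x) * dterm_row q 1 (1 - x^2) m) has_sum L) UNIV"
    unfolding L_def using u q by (intro has_sum_add has_sum_cmult_right has_sum_dterm_rows[OF q])
      (auto simp: abs_square_le_1 less_imp_le)
  then have "L = euler_series (q^2) (-q) / (2*x) * ((1 - sqrt ((1 - x) / (1 + x))) * euler_series (-q) (-s)
                   + (1 + sqrt ((1 - x) / (1 + x))) * euler_series (-q) s)"
    using dterm_rows_sums[OF x q s_def[THEN meta_eq_to_obj_eq] refl] has_sum_imp_sums sums_unique2 by blast
  moreover have "0 \<le> s" "s < 1" using x by (auto simp: s_def power_le_one power_less_one_iff)
  ultimately show ?thesis
    using has_sum_arm_gf_dterm[of x q] x q unfolding L_def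
    by (simp add: qpoch_inf_eq_euler_series_small abs_square_less_1)
qed

abbreviation parts_gt :: "nat list \<Rightarrow> nat \<Rightarrow> nat" where
  "parts_gt xs k \<equiv> length (filter (\<lambda>a. k < a) xs)"

lemma less_parts_gt_iff:
  assumes "sorted_wrt (\<ge>) xs"
  shows "(j < parts_gt xs k) \<longleftrightarrow> (j < length xs \<and> k < xs ! j)"
  using assms
proof (induction xs arbitrary: j)
  case Nil then show ?case by simp
next
  case (Cons a xs)
  then have s: "sorted_wrt (\<ge>) xs" and ge: "\<forall>b\<in>set xs. b \<le> a" by auto
  show ?case
  proof (cases "k < a")
    case True
    then show ?thesis using Cons.IH[OF s] by (cases j) auto
  next
    case False
    then have "filter (\<lambda>b. k < b) xs = []" using ge by (auto simp: filter_empty_conv)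
    moreover have "\<not> k < (a # xs) ! j" if "j < Suc (length xs)" for j
      using that False ge by (cases j) (auto simp: nth_mem dest!: bspec[of _ _ "xs ! (j - 1)"])
    ultimately show ?thesis using False by auto
  qed
qed

lemma sorted_hd_ge: "sorted_wrt (\<ge>) (xs::nat list) \<Longrightarrow> xs \<noteq> [] \<Longrightarrow> v \<in> set xs \<Longrightarrow> v \<le> hd xs"
  by (cases xs) auto

lemma length_conjugate: "length (conjugate xs) = (if xs = [] then 0 else hd xs)"
  by (simp add: conjugate_def)

lemma nth_conjugate: "k < length (conjugate xs) \<Longrightarrow> conjugate xs ! k = parts_gt xs k"
  by (auto simp: conjugate_def split: if_splits)

lemma parts_gt_antimono: "k \<le> k' \<Longrightarrow> parts_gt xs k' \<le> parts_gt xs k"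
  by (induction xs) auto

lemma sorted_conjugate: "sorted_wrt (\<ge>) (conjugate xs)"
  unfolding conjugate_def sorted_wrt_map
  by (auto simp: sorted_wrt_iff_nth_less parts_gt_antimono)

lemma length_filter_less_upt: "length (filter (\<lambda>k. k < c) [0..<h]) = min c h"
  by (induction h) auto

text \<open>The self-conjugate partition whose Durfee square has side length (length \<mu>) and whose rows extend
  the square by the entries of \<mu>; zero entries are allowed in \<mu>.\<close>

definition sc_of :: "nat list \<Rightarrow> nat list" where
  "sc_of mu = map (\<lambda>a. a + length mu) mu @ conjugate mu"

definition decr_lists :: "nat list set" where
  "decr_lists = {mu. sorted_wrt (\<ge>) mu}"

lemma set_conjugate_le: "c \<in> set (conjugate xs) \<Longrightarrow> c \<le> length xs"
  by (auto simp: conjugate_def split: if_splits)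

lemma sorted_sc_of: "sorted_wrt (\<ge>) mu \<Longrightarrow> sorted_wrt (\<ge>) (sc_of mu)"
  unfolding sc_of_def sorted_wrt_append
  by (auto simp: sorted_wrt_map sorted_conjugate dest: set_conjugate_le elim: sorted_wrt_mono_rel[rotated])

lemma sc_of_pos: assumes "sorted_wrt (\<ge>) mu" shows "\<forall>p\<in>set (sc_of mu). 0 < p"
proof
  fix p assume p: "p \<in> set (sc_of mu)"
  show "0 < p"
  proof (cases "p \<in> set (map (\<lambda>a. a + length mu) mu)")
    case True then show ?thesis by (cases mu) auto
  next
    case False
    then have "p \<in> set (conjugate mu)" using p by (simp add: sc_of_def)
    then obtain k where k: "k < length (conjugate mu)" and pk: "p = conjugate mu ! k"
      by (auto simp: in_set_conv_nth)
    then have ne: "mu \<noteq> []" and kh: "k < hd mu" by (auto simp: length_conjugate split: if_splits)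
    have "p = parts_gt mu k" using pk k by (simp add: nth_conjugate)
    moreover have "0 < parts_gt mu k" using less_parts_gt_iff[OF assms, of 0 k] ne kh by (simp add: hd_conv_nth)
    ultimately show ?thesis by simp
  qed
qed

lemma parts_gt_map_add: "d \<le> i \<Longrightarrow> parts_gt (map (\<lambda>a. a + d) xs) i = parts_gt xs (i - d)"
  by (induction xs) auto

lemma parts_gt_map_add_small: "i < d \<Longrightarrow> parts_gt (map (\<lambda>a. a + d) xs) i = length xs"
  by (induction xs) auto

lemma parts_gt_conjugate_big: "length xs \<le> i \<Longrightarrow> parts_gt (conjugate xs) i = 0"
  using set_conjugate_le[of _ xs] by (fastforce simp: filter_empty_conv)

lemma parts_gt_conjugate_small:
  assumes s: "sorted_wrt (\<ge>) xs" and i: "i < length xs"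
  shows "parts_gt (conjugate xs) i = xs ! i"
proof -
  have ne: "xs \<noteq> []" using i by auto
  have "parts_gt (conjugate xs) i = length (filter (\<lambda>k. i < parts_gt xs k) [0..<hd xs])"
    using ne by (simp add: conjugate_def filter_map comp_def)
  also have "\<dots> = length (filter (\<lambda>k. k < xs ! i) [0..<hd xs])"
    using less_parts_gt_iff[OF s] i by simp
  also have "\<dots> = min (xs ! i) (hd xs)" by (rule length_filter_less_upt)
  also have "\<dots> = xs ! i" using sorted_hd_ge[OF s ne, of "xs ! i"] i by (simp add: min_def)
  finally show ?thesis .
qed

lemma conjugate_sc_of: assumes s: "sorted_wrt (\<ge>) mu" shows "conjugate (sc_of mu) = sc_of mu"
proof (cases "mu = []")
  case True then show ?thesis by (simp add: sc_of_def conjugate_def)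
next
  case False
  define d where "d = length mu"
  have hd_sc: "hd (sc_of mu) = hd mu + d" using False by (cases mu) (auto simp: sc_of_def d_def)
  have len_sc: "length (sc_of mu) = d + hd mu" using False by (simp add: sc_of_def d_def length_conjugate)
  have ne: "sc_of mu \<noteq> []" using False by (simp add: sc_of_def)
  show ?thesis
  proof (rule nth_equalityI)
    show "length (conjugate (sc_of mu)) = length (sc_of mu)"
      using ne hd_sc len_sc by (simp add: length_conjugate)
    fix i assume i: "i < length (conjugate (sc_of mu))"
    then have i': "i < d + hd mu" using ne hd_sc by (simp add: length_conjugate)
    have "conjugate (sc_of mu) ! i = parts_gt (sc_of mu) i" using i by (rule nth_conjugate)
    also have "\<dots> = parts_gt (map (\<lambda>a. a + d) mu) i + parts_gt (conjugate mu) i"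
      by (simp add: sc_of_def d_def)
    also have "\<dots> = sc_of mu ! i"
    proof (cases "i < d")
      case True
      then show ?thesis using parts_gt_map_add_small[OF True, of mu] parts_gt_conjugate_small[OF s, of i]
        by (simp add: sc_of_def d_def nth_append)
    next
      case False
      then have "i - d < length (conjugate mu)" using i' False \<open>mu \<noteq> []\<close> by (simp add: length_conjugate)
      then show ?thesis using False parts_gt_map_add[of d i mu] parts_gt_conjugate_big[of mu i]
        by (simp add: sc_of_def d_def nth_append nth_conjugate)
    qed
    finally show "conjugate (sc_of mu) ! i = sc_of mu ! i" .
  qed
qed

lemma sc_of_in_SC: "mu \<in> decr_lists \<Longrightarrow> sc_of mu \<in> SC"
  unfolding SC_def decr_lists_def is_partition_def using sorted_sc_of sc_of_pos conjugate_sc_of by auto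

definition durfee :: "nat list \<Rightarrow> nat" where
  "durfee la = (LEAST i. \<not> (i < length la \<and> i < la ! i))"

definition arm_of :: "nat list \<Rightarrow> nat list" where
  "arm_of la = map (\<lambda>a. a - durfee la) (take (durfee la) la)"

lemma less_durfee: "i < durfee la \<Longrightarrow> i < length la \<and> i < la ! i"
  unfolding durfee_def by (drule not_less_Least) simp

lemma durfee_stop: "\<not> (durfee la < length la \<and> durfee la < la ! durfee la)"
  unfolding durfee_def by (rule LeastI[of _ "length la"]) simp

lemma durfee_le_length: "durfee la \<le> length la"
  using less_durfee[of "length la" la] by (metis less_irrefl not_le)

lemma durfee_sc_of: "durfee (sc_of mu) = length mu"
  unfolding durfee_def
proof (rule Least_equality)
  show "\<not> (length mu < length (sc_of mu) \<and> length mu < sc_of mu ! length mu)"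
  proof
    assume a: "length mu < length (sc_of mu) \<and> length mu < sc_of mu ! length mu"
    then have "0 < length (conjugate mu)" by (simp add: sc_of_def)
    then have "sc_of mu ! length mu = parts_gt mu 0" by (simp add: sc_of_def nth_append nth_conjugate)
    moreover have "parts_gt mu 0 \<le> length mu" by simp
    ultimately show False using a by linarith
  qed
  fix y assume y: "\<not> (y < length (sc_of mu) \<and> y < sc_of mu ! y)"
  show "length mu \<le> y"
  proof (rule ccontr)
    assume "\<not> length mu \<le> y"
    then have "y < length mu" by simp
    then show False using y by (simp add: sc_of_def nth_append)
  qed
qed

lemma arm_of_sc_of: "arm_of (sc_of mu) = mu"
  unfolding arm_of_def durfee_sc_of by (simp add: sc_of_def comp_def)

lemma SC_D:
  assumes "la \<in> SC"
  shows "sorted_wrt (\<ge>) la" "\<forall>p\<in>set la. 0 < p" "conjugate la = la"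
  using assms by (auto simp: SC_def is_partition_def)

lemma sorted_nth_mono: "sorted_wrt (\<ge>) (xs::nat list) \<Longrightarrow> i \<le> j \<Longrightarrow> j < length xs \<Longrightarrow> xs ! j \<le> xs ! i"
  by (metis antisym_conv1 order.refl sorted_wrt_nth_less)

lemma durfee_le_nth:
  assumes s: "sorted_wrt (\<ge>) la" and i: "i < durfee la"
  shows "durfee la \<le> la ! i"
proof -
  have "durfee la - 1 < la ! (durfee la - 1)" "durfee la - 1 < length la"
    using less_durfee[of "durfee la - 1" la] i by auto
  moreover have "la ! (durfee la - 1) \<le> la ! i"
    using i \<open>durfee la - 1 < length la\<close> s by (intro sorted_nth_mono) auto
  ultimately show ?thesis by linarith
qed

lemma nth_le_durfee:
  assumes s: "sorted_wrt (\<ge>) la" and i: "durfee la \<le> i" "i < length la"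
  shows "la ! i \<le> durfee la"
proof -
  have "la ! durfee la \<le> durfee la" using durfee_stop[of la] i by simp
  moreover have "la ! i \<le> la ! durfee la" using i s by (intro sorted_nth_mono) auto
  ultimately show ?thesis by simp
qed

lemma take_durfee:
  assumes "sorted_wrt (\<ge>) la"
  shows "take (durfee la) la = map (\<lambda>a. a + durfee la) (arm_of la)"
  using durfee_le_nth[OF assms] durfee_le_length[of la]
  by (intro nth_equalityI) (auto simp: arm_of_def)

lemma arm_of_in_decr_lists:
  assumes "sorted_wrt (\<ge>) la"
  shows "arm_of la \<in> decr_lists"
proof -
  have "sorted_wrt (\<ge>) (take (durfee la) la)" using assms by (rule sorted_wrt_take)
  then have "sorted_wrt (\<lambda>x y. y - durfee la \<le> x - durfee la) (take (durfee la) la)"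
    by (rule sorted_wrt_mono_rel[rotated]) (auto intro: diff_le_mono)
  then show ?thesis unfolding decr_lists_def arm_of_def by (simp add: sorted_wrt_map)
qed

lemma parts_gt_drop_durfee:
  assumes "sorted_wrt (\<ge>) la"
  shows "parts_gt (drop (durfee la) la) (durfee la + k) = 0"
proof -
  have "\<not> durfee la + k < a" if "a \<in> set (drop (durfee la) la)" for a
  proof -
    obtain j where "durfee la + j < length la" "a = la ! (durfee la + j)"
      using \<open>a \<in> set (drop (durfee la) la)\<close> by (force simp: in_set_conv_nth)
    then show ?thesis using nth_le_durfee[OF assms, of "durfee la + j"] by simp
  qed
  then show ?thesis by (simp add: filter_empty_conv)
qed

lemma drop_durfee:
  assumes la: "la \<in> SC" and ne: "la \<noteq> []"
  shows "drop (durfee la) la = conjugate (arm_of la)"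
proof -
  note f = SC_D[OF la]
  define d where "d = durfee la"
  define mu where "mu = arm_of la"
  have dle: "d \<le> length la" by (simp add: d_def durfee_le_length)
  have lmu: "length mu = d" using dle by (simp add: mu_def arm_of_def d_def)
  have len: "length la = hd la"
    using arg_cong[OF f(3), of length] ne by (simp add: length_conjugate)
  have d0: "0 < d"
    using durfee_stop[of la] f(2) ne by (cases d) (auto simp: d_def nth_mem)
  have "hd mu = la ! 0 - d" using d0 ne
    by (simp add: mu_def arm_of_def d_def[symmetric] hd_map hd_take hd_conv_nth)
  then have length_eq: "length (drop d la) = length (conjugate mu)"
    using lmu d0 len ne by (auto simp: length_conjugate hd_conv_nth)
  show ?thesis unfolding d_def[symmetric] mu_def[symmetric]
  proof (rule nth_equalityI[OF length_eq])
    fix k assume k: "k < length (drop d la)"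
    have "drop d la ! k = conjugate la ! (d + k)" using dle f(3) by simp
    also have "\<dots> = parts_gt la (d + k)"
      using k f(3) by (intro nth_conjugate) simp
    also have "\<dots> = parts_gt (take d la) (d + k) + parts_gt (drop d la) (d + k)"
      by (metis append_take_drop_id filter_append length_append)
    also have "\<dots> = parts_gt mu k"
      using parts_gt_drop_durfee[OF f(1), of k] parts_gt_map_add[of d "d + k" mu]
      by (simp add: take_durfee[OF f(1)] d_def mu_def)
    also have "\<dots> = conjugate mu ! k"
      using k length_eq by (simp add: nth_conjugate)
    finally show "drop d la ! k = conjugate mu ! k" .
  qed
qed

lemma sc_of_arm_of:
  assumes "la \<in> SC"
  shows "sc_of (arm_of la) = la"
proof (cases "la = []")
  case True then show ?thesis by (simp add: arm_of_def sc_of_def conjugate_def)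
next
  case False
  have "length (arm_of la) = durfee la" using durfee_le_length[of la] by (simp add: arm_of_def)
  then have "sc_of (arm_of la) = take (durfee la) la @ drop (durfee la) la"
    unfolding sc_of_def take_durfee[OF SC_D(1)[OF assms]] drop_durfee[OF assms False] by simp
  then show ?thesis by simp
qed

lemma bij_betw_sc_of: "bij_betw sc_of decr_lists SC"
proof (rule bij_betw_byWitness[where f'=arm_of])
  show "\<forall>a\<in>decr_lists. arm_of (sc_of a) = a" by (auto simp: decr_lists_def arm_of_sc_of)
  show "\<forall>a'\<in>SC. sc_of (arm_of a') = a'" using sc_of_arm_of by blast
  show "sc_of ` decr_lists \<subseteq> SC" using sc_of_in_SC by blast
  show "arm_of ` SC \<subseteq> decr_lists" using arm_of_in_decr_lists SC_D(1) by blast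
qed

lemma sum_list_map_add: "sum_list (map (\<lambda>a. a + c) xs) = sum_list xs + length xs * (c::nat)"
  by (induction xs) auto

lemma sum_list_ind_upt: "sum_list (map (\<lambda>k. if k < a then 1 else 0::nat) [0..<h]) = min a h"
  by (induction h) auto

lemma sum_list_parts_gt: "\<forall>a\<in>set xs. a \<le> h \<Longrightarrow> sum_list (map (\<lambda>k. parts_gt xs k) [0..<h]) = sum_list xs"
proof (induction xs)
  case Nil then show ?case by (induction h) auto
next
  case (Cons a xs)
  have "sum_list (map (\<lambda>k. parts_gt (a # xs) k) [0..<h])
      = sum_list (map (\<lambda>k. (if k < a then 1 else 0) + parts_gt xs k) [0..<h])"
    by (rule arg_cong[where f=sum_list]) auto
  also have "\<dots> = sum_list (map (\<lambda>k. if k < a then 1 else 0::nat) [0..<h]) + sum_list (map (\<lambda>k. parts_gt xs k) [0..<h])"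
    by (rule sum_list_addf)
  also have "\<dots> = a + sum_list xs" using Cons by (simp add: sum_list_ind_upt min_def)
  finally show ?case by simp
qed

lemma psize_sc_of: assumes s: "sorted_wrt (\<ge>) mu"
  shows "psize (sc_of mu) = length mu * length mu + 2 * sum_list mu"
proof -
  have "sum_list (conjugate mu) = sum_list mu"
  proof (cases "mu = []")
    case True then show ?thesis by (simp add: conjugate_def)
  next
    case False
    then show ?thesis unfolding conjugate_def
      using sum_list_parts_gt[of mu "hd mu"] sorted_hd_ge[OF s False] by simp
  qed
  then show ?thesis by (simp add: psize_def sc_of_def sum_list_map_add)
qed

definition corners :: "nat list \<Rightarrow> nat set" where
  "corners xs = {i. i < length xs \<and> (Suc i = length xs \<or> xs ! Suc i < xs ! i)}"

lemma finite_corners: "finite (corners xs)"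
  unfolding corners_def by simp

lemma hook_eq_1_iff:
  assumes s: "sorted_wrt (\<ge>) la" and c: "(i, j) \<in> cells la"
  shows "hook la (i, j) = 1 \<longleftrightarrow> j = la ! i - 1 \<and> i \<in> corners la"
proof -
  have i: "i < length la" and j: "j < la ! i" using c by (auto simp: cells_def)
  have "la \<noteq> []" using i by auto
  then have "la ! i \<le> hd la" using sorted_hd_ge[OF s, of "la ! i"] i by (simp add: nth_mem)
  then have "conjugate la ! j = parts_gt la j"
    using i j by (intro nth_conjugate) (auto simp: length_conjugate)
  then have "hook la (i, j) = 1 \<longleftrightarrow> la ! i - j - 1 = 0 \<and> parts_gt la j - i - 1 = 0"
    by (simp add: hook_def)
  also have "\<dots> \<longleftrightarrow> j = la ! i - 1 \<and> \<not> (Suc i < length la \<and> j < la ! Suc i)"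
    using j less_parts_gt_iff[OF s, of "Suc i" j] by auto
  also have "\<dots> \<longleftrightarrow> j = la ! i - 1 \<and> i \<in> corners la"
    using i j by (auto simp: corners_def)
  finally show ?thesis .
qed

lemma n1_corners:
  assumes s: "sorted_wrt (\<ge>) la" and pos: "\<forall>p\<in>set la. 0 < p"
  shows "n1 la = card (corners la)"
proof -
  have "(i, la ! i - 1) \<in> cells la" if "i \<in> corners la" for i
    using that pos by (auto simp: corners_def cells_def nth_mem)
  then have "{c \<in> cells la. hook la c = 1} = (\<lambda>i. (i, la ! i - 1)) ` corners la"
    using hook_eq_1_iff[OF s] by auto
  moreover have "inj_on (\<lambda>i. (i, la ! i - 1)) (corners la)" by (rule inj_onI) simp
  ultimately show ?thesis unfolding n1_def by (simp add: card_image)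
qed

lemma corners_Cons:
  assumes "xs \<noteq> []"
  shows "corners (a # xs) = (if xs ! 0 < a then {0} else {}) \<union> Suc ` corners xs"
proof (intro equalityI subsetI)
  fix i assume i: "i \<in> corners (a # xs)"
  show "i \<in> (if xs ! 0 < a then {0} else {}) \<union> Suc ` corners xs"
  proof (cases i)
    case 0 then show ?thesis using i assms by (auto simp: corners_def)
  next
    case (Suc k) then show ?thesis using i by (auto simp: corners_def)
  qed
next
  fix i assume "i \<in> (if xs ! 0 < a then {0} else {}) \<union> Suc ` corners xs"
  then show "i \<in> corners (a # xs)" using assms by (auto simp: corners_def split: if_splits)
qed

lemma card_corners: "sorted_wrt (\<ge>) (xs::nat list) \<Longrightarrow> card (corners xs) = card (set xs)"
proof (induction xs)
  case Nil then show ?case by (simp add: corners_def)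
next
  case (Cons a xs)
  then have s: "sorted_wrt (\<ge>) xs" and ge: "\<forall>b\<in>set xs. b \<le> a" by auto
  show ?case
  proof (cases "xs = []")
    case True
    have "corners [a] = {0}" by (auto simp: corners_def)
    then show ?thesis using True by simp
  next
    case False
    have "card (Suc ` corners xs) = card (corners xs)" by (rule card_image) simp
    have mem: "a \<in> set xs \<longleftrightarrow> \<not> xs ! 0 < a"
    proof
      assume "a \<in> set xs"
      then have "a \<le> hd xs" using sorted_hd_ge[OF s False] by blast
      then show "\<not> xs ! 0 < a" using False by (simp add: hd_conv_nth)
    next
      assume "\<not> xs ! 0 < a"
      moreover have "xs ! 0 \<le> a" using ge False by (simp add: nth_mem)
      ultimately have "xs ! 0 = a" by simp
      then show "a \<in> set xs" using False by (metis nth_mem length_greater_0_conv)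
    qed
    have "card (corners (a # xs)) = (if xs ! 0 < a then 1 else 0) + card (corners xs)"
      unfolding corners_Cons[OF False]
      using \<open>card (Suc ` corners xs) = card (corners xs)\<close> finite_corners[of xs]
      by (auto simp: card_insert_if)
    also have "\<dots> = card (set (a # xs))" using Cons.IH[OF s] mem
      by (auto simp: card_insert_if)
    finally show ?thesis .
  qed
qed

lemma parts_gt_Suc: "parts_gt xs k = parts_gt xs (Suc k) + length (filter (\<lambda>a. a = Suc k) xs)"
  by (induction xs) auto

lemma parts_gt_Suc_less_iff: "parts_gt xs (Suc k) < parts_gt xs k \<longleftrightarrow> Suc k \<in> set xs"
proof -
  have "0 < length (filter (\<lambda>a. a = Suc k) xs) \<longleftrightarrow> Suc k \<in> set xs"
    by (auto simp: filter_empty_conv length_greater_0_conv[symmetric] simp del: length_greater_0_conv)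
  then show ?thesis using parts_gt_Suc[where xs=xs and k=k] by linarith
qed

lemma Suc_corners_conjugate:
  assumes s: "sorted_wrt (\<ge>) (mu::nat list)"
  shows "Suc ` corners (conjugate mu) = set mu - {0}"
proof (cases "mu = []")
  case True then show ?thesis by (simp add: corners_def conjugate_def)
next
  case ne: False
  have lc: "length (conjugate mu) = hd mu" using ne by (simp add: length_conjugate)
  have corner_iff: "k \<in> corners (conjugate mu) \<longleftrightarrow> Suc k \<in> set mu" for k
  proof (cases "Suc k < hd mu")
    case True
    then show ?thesis using lc parts_gt_Suc_less_iff[where xs=mu and k=k] by (simp add: corners_def nth_conjugate)
  next
    case False
    have "Suc k \<in> set mu \<longleftrightarrow> Suc k = hd mu"
      using False sorted_hd_ge[OF s ne, of "Suc k"] hd_in_set[OF ne] by fastforce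
    moreover have "k \<in> corners (conjugate mu) \<longleftrightarrow> Suc k = hd mu"
      using False lc unfolding corners_def by auto
    ultimately show ?thesis by simp
  qed
  show ?thesis
  proof (rule set_eqI)
    fix v
    show "v \<in> Suc ` corners (conjugate mu) \<longleftrightarrow> v \<in> set mu - {0}"
    proof (cases v)
      case (Suc k)
      then show ?thesis using corner_iff[of k] by auto
    qed simp
  qed
qed

lemma card_corners_conjugate:
  "sorted_wrt (\<ge>) (mu::nat list) \<Longrightarrow> card (corners (conjugate mu)) = card (set mu - {0})"
  using card_image[of Suc "corners (conjugate mu)"] Suc_corners_conjugate by simp

lemma corners_sc_of_left:
  assumes s: "sorted_wrt (\<ge>) mu" and i: "i < length mu"
  shows "i \<in> corners (sc_of mu) \<longleftrightarrow> i \<in> corners mu"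
proof (cases "Suc i < length mu")
  case True
  then show ?thesis using i by (simp add: corners_def sc_of_def nth_append)
next
  case False
  then have last: "Suc i = length mu" using i by simp
  have "sc_of mu ! Suc i < sc_of mu ! i" if "Suc i < length (sc_of mu)"
  proof -
    have "sc_of mu ! Suc i = parts_gt mu 0"
      using that last by (simp add: sc_of_def nth_append nth_conjugate)
    moreover have "parts_gt mu 0 < mu ! i + length mu"
    proof (cases "mu ! i = 0")
      case True
      then have "\<not> i < parts_gt mu 0" using less_parts_gt_iff[OF s, of i 0] by simp
      then show ?thesis using last by simp
    qed (use length_filter_le[of "\<lambda>a. 0 < a" mu] in linarith)
    ultimately show ?thesis using i by (simp add: sc_of_def nth_append)
  qed
  then show ?thesis using i last by (auto simp: corners_def sc_of_def)
qed

lemma corners_sc_of_right: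
  "length mu + k \<in> corners (sc_of mu) \<longleftrightarrow> k \<in> corners (conjugate mu)"
  by (simp add: corners_def sc_of_def nth_append)

lemma corners_sc_of:
  assumes s: "sorted_wrt (\<ge>) mu"
  shows "corners (sc_of mu) = corners mu \<union> (\<lambda>k. k + length mu) ` corners (conjugate mu)"
proof (rule set_eqI)
  fix i
  show "i \<in> corners (sc_of mu) \<longleftrightarrow> i \<in> corners mu \<union> (\<lambda>k. k + length mu) ` corners (conjugate mu)"
  proof (cases "i < length mu")
    case True
    then show ?thesis using corners_sc_of_left[OF s True] by auto
  next
    case False
    then obtain k where "i = length mu + k" using le_Suc_ex not_less by blast
    moreover have "i \<notin> corners mu" using False by (simp add: corners_def)
    ultimately show ?thesis using corners_sc_of_right[of mu k] by (auto simp: add.commute)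
  qed
qed

lemma n1_sc_of: assumes s: "sorted_wrt (\<ge>) mu"
  shows "n1 (sc_of mu) = card (set mu) + card (set mu - {0})"
proof -
  have "n1 (sc_of mu) = card (corners (sc_of mu))"
    using sorted_sc_of[OF s] sc_of_pos[OF s] by (rule n1_corners)
  also have "\<dots> = card (corners mu) + card ((\<lambda>k. k + length mu) ` corners (conjugate mu))"
    unfolding corners_sc_of[OF s]
    by (rule card_Un_disjoint) (auto simp: finite_corners corners_def)
  also have "card ((\<lambda>k. k + length mu) ` corners (conjugate mu)) = card (corners (conjugate mu))"
    by (rule card_image) simp
  finally show ?thesis using card_corners[OF s] card_corners_conjugate[OF s] by simp
qed

definition decr_lists_len :: "nat \<Rightarrow> nat list set" where
  "decr_lists_len d = {mu. sorted_wrt (\<ge>) mu \<and> length mu = d}"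

definition pad_Suc :: "nat \<Rightarrow> nat \<times> nat list \<Rightarrow> nat list" where
  "pad_Suc d z = map Suc (snd z) @ replicate (d - fst z) 0"

definition unpad_Suc :: "nat list \<Rightarrow> nat \<times> nat list" where
  "unpad_Suc mu = (length (filter (\<lambda>a. a \<noteq> 0) mu), map (\<lambda>a. a - 1) (filter (\<lambda>a. a \<noteq> 0) mu))"

lemma sorted_split_zeros:
  "sorted_wrt (\<ge>) (mu::nat list) \<Longrightarrow> mu = filter (\<lambda>a. a \<noteq> 0) mu @ replicate (length mu - length (filter (\<lambda>a. a \<noteq> 0) mu)) 0"
proof (induction mu)
  case Nil then show ?case by simp
next
  case (Cons a mu)
  then have s: "sorted_wrt (\<ge>) mu" and ge: "\<forall>b\<in>set mu. b \<le> a" by auto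
  show ?case
  proof (cases "a = 0")
    case True
    then have "\<forall>b\<in>set mu. b = 0" using ge by auto
    then have "filter (\<lambda>a. a \<noteq> 0) mu = []" and "mu = replicate (length mu) 0"
      by (auto simp: filter_empty_conv intro: replicate_eqI)
    then show ?thesis using True by simp
  next
    case False
    have le: "length (filter (\<lambda>a. a \<noteq> 0) mu) \<le> length mu" by simp
    show ?thesis using False Cons.IH[OF s] le by (simp add: Suc_diff_le)
  qed
qed

lemma map_Suc_pred: "map Suc (map (\<lambda>a. a - 1) (filter (\<lambda>a. a \<noteq> (0::nat)) mu)) = filter (\<lambda>a. a \<noteq> 0) mu"
  by (induction mu) auto

lemma sorted_replicate_0: "sorted_wrt (\<ge>) (replicate k (0::nat))"
  by (induction k) auto

lemma bij_betw_pad_Suc: "bij_betw (pad_Suc d) (SIGMA n:{..d}. decr_lists_len n) (decr_lists_len d)"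
proof (rule bij_betw_byWitness[where f'=unpad_Suc])
  show "\<forall>z\<in>(SIGMA n:{..d}. decr_lists_len n). unpad_Suc (pad_Suc d z) = z"
  proof
    fix z assume z: "z \<in> (SIGMA n:{..d}. decr_lists_len n)"
    obtain n nu where zz: "z = (n, nu)" by (cases z)
    have "filter (\<lambda>a. a \<noteq> 0) (pad_Suc d z) = map Suc nu"
      unfolding pad_Suc_def zz by (simp add: filter_empty_conv comp_def)
    moreover have "length nu = n" using z zz by (simp add: decr_lists_len_def)
    ultimately show "unpad_Suc (pad_Suc d z) = z" unfolding unpad_Suc_def zz by (simp add: comp_def)
  qed
  show "\<forall>mu\<in>decr_lists_len d. pad_Suc d (unpad_Suc mu) = mu"
  proof
    fix mu assume mu: "mu \<in> decr_lists_len d"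
    then have s: "sorted_wrt (\<ge>) mu" and l: "length mu = d" by (auto simp: decr_lists_len_def)
    show "pad_Suc d (unpad_Suc mu) = mu"
      unfolding pad_Suc_def unpad_Suc_def using sorted_split_zeros[OF s] l map_Suc_pred[of mu] by simp
  qed
  show "pad_Suc d ` (SIGMA n:{..d}. decr_lists_len n) \<subseteq> decr_lists_len d"
  proof
    fix mu assume "mu \<in> pad_Suc d ` (SIGMA n:{..d}. decr_lists_len n)"
    then obtain n nu where n: "n \<le> d" and nu: "nu \<in> decr_lists_len n" and mu: "mu = pad_Suc d (n, nu)" by auto
    have "sorted_wrt (\<ge>) (map Suc nu @ replicate (d - n) 0)"
      using nu by (auto simp: decr_lists_len_def sorted_wrt_append sorted_wrt_map sorted_replicate_0)
    then show "mu \<in> decr_lists_len d" using mu n nu by (simp add: decr_lists_len_def pad_Suc_def)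
  qed
  show "unpad_Suc ` decr_lists_len d \<subseteq> (SIGMA n:{..d}. decr_lists_len n)"
  proof
    fix z assume "z \<in> unpad_Suc ` decr_lists_len d"
    then obtain mu where mu: "mu \<in> decr_lists_len d" and z: "z = unpad_Suc mu" by auto
    then have s: "sorted_wrt (\<ge>) mu" and l: "length mu = d" by (auto simp: decr_lists_len_def)
    have "sorted_wrt (\<ge>) (filter (\<lambda>a. a \<noteq> 0) mu)" using s by (rule sorted_wrt_filter)
    then have "sorted_wrt (\<ge>) (map (\<lambda>a. a - 1) (filter (\<lambda>a. a \<noteq> 0) mu))"
      unfolding sorted_wrt_map by (rule sorted_wrt_mono_rel[rotated]) auto
    moreover have "length (filter (\<lambda>a. a \<noteq> 0) mu) \<le> d" using l by (metis length_filter_le)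
    ultimately show "z \<in> (SIGMA n:{..d}. decr_lists_len n)" using z by (simp add: unpad_Suc_def decr_lists_len_def)
  qed
qed

lemma pad_Suc_props:
  assumes "length nu = n" "n \<le> d"
  shows "sum_list (pad_Suc d (n, nu)) = sum_list nu + n"
    and "set (pad_Suc d (n, nu)) - {0} = Suc ` set nu"
    and "0 \<in> set (pad_Suc d (n, nu)) \<longleftrightarrow> n < d"
proof -
  show "sum_list (pad_Suc d (n, nu)) = sum_list nu + n"
  proof -
    have "sum_list (map Suc nu) = sum_list nu + length nu" by (induction nu) auto
    then show ?thesis unfolding pad_Suc_def using assms(1) by (simp add: sum_list_replicate)
  qed
  show "set (pad_Suc d (n, nu)) - {0} = Suc ` set nu"
    unfolding pad_Suc_def by auto
  show "0 \<in> set (pad_Suc d (n, nu)) \<longleftrightarrow> n < d"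
    unfolding pad_Suc_def using assms by auto
qed

lemma card_set_pad_Suc:
  assumes "length nu = n" "n \<le> d"
  shows "card (set (pad_Suc d (n, nu)) - {0}) = card (set nu)"
    and "card (set (pad_Suc d (n, nu))) = card (set nu) + (if n < d then 1 else 0)"
proof -
  show c1: "card (set (pad_Suc d (n, nu)) - {0}) = card (set nu)"
    unfolding pad_Suc_props(2)[OF assms] by (rule card_image) simp
  show "card (set (pad_Suc d (n, nu))) = card (set nu) + (if n < d then 1 else 0)"
  proof (cases "n < d")
    case True
    then have "0 \<in> set (pad_Suc d (n, nu))" using pad_Suc_props(3)[OF assms] by simp
    then have "card (set (pad_Suc d (n, nu))) = Suc (card (set (pad_Suc d (n, nu)) - {0}))"
      by (intro card_Suc_Diff1[symmetric]) auto
    then show ?thesis using c1 True by simp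
  next
    case False
    then have "0 \<notin> set (pad_Suc d (n, nu))" using pad_Suc_props(3)[OF assms] by simp
    then have "set (pad_Suc d (n, nu)) = set (pad_Suc d (n, nu)) - {0}" by auto
    then show ?thesis using c1 False by simp
  qed
qed

lemma geom_summable_on: "0 \<le> (p::real) \<Longrightarrow> p < 1 \<Longrightarrow> (\<lambda>a::nat. p^a) summable_on UNIV"
  by (subst summable_on_UNIV_nonneg_real_iff) (auto intro: summable_geometric)

lemma power_sum_list_summable_on:
  assumes p: "0 \<le> (p::real)" "p < 1"
  shows "(\<lambda>mu. p^(sum_list mu)) summable_on {mu::nat list. length mu = d}"
proof (induction d)
  case 0
  have "{mu::nat list. length mu = 0} = {[]}" by auto
  then show ?case by simp
next
  case (Suc d)
  then obtain S where S: "((\<lambda>mu. p^(sum_list mu)) has_sum S) {mu::nat list. length mu = d}"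
    by (auto simp: summable_on_def)
  have bij: "bij_betw (\<lambda>z. fst z # snd z) (UNIV \<times> {mu::nat list. length mu = d}) {mu. length mu = Suc d}"
    by (rule bij_betw_byWitness[where f'="\<lambda>mu. (hd mu, tl mu)"]) (auto simp: length_Suc_conv)
  have "(\<lambda>z. p^(sum_list (fst z # snd z))) summable_on (SIGMA a:UNIV. {mu::nat list. length mu = d})"
  proof (rule summable_on_SigmaI[where g="\<lambda>a. p^a * S"])
    fix a :: nat
    have "((\<lambda>mu. p^a * p^(sum_list mu)) has_sum p^a * S) {mu::nat list. length mu = d}"
      using S by (rule has_sum_cmult_right)
    then show "((\<lambda>y. p^(sum_list (fst (a, y) # snd (a, y)))) has_sum p^a * S) {mu::nat list. length mu = d}"
      by (simp add: power_add)
  next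
    show "(\<lambda>a. p^a * S) summable_on UNIV" using geom_summable_on[OF p] by (rule summable_on_cmult_left)
  qed (use p in simp)
  then show ?case using summable_on_reindex_bij_betw[OF bij, of "\<lambda>mu. p^(sum_list mu)"] by simp
qed

definition distinct_weight :: "real \<Rightarrow> real \<Rightarrow> nat list \<Rightarrow> real" where
  "distinct_weight y p mu = y^(card (set mu)) * p^(sum_list mu)"

definition sc_weight :: "real \<Rightarrow> real \<Rightarrow> nat list \<Rightarrow> real" where
  "sc_weight x p mu = x^(card (set mu) + card (set mu - {0})) * p^(sum_list mu)"

lemma decr_lists_len_subset: "decr_lists_len d \<subseteq> {mu. length mu = d}" by (auto simp: decr_lists_len_def)

lemma summable_on_decr_lists_len:
  fixes F :: "nat list \<Rightarrow> real" and p c :: real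
  assumes p: "0 \<le> p" "p < 1" and c: "0 \<le> c" "c \<le> 1"
    and F: "\<And>mu. F mu = c^(k mu) * p^(sum_list mu)"
  shows "F summable_on decr_lists_len d"
proof (rule summable_on_comparison_test)
  show "(\<lambda>mu. p^(sum_list mu)) summable_on decr_lists_len d"
    using summable_on_subset_banach[OF power_sum_list_summable_on[OF p] decr_lists_len_subset] .
  fix mu
  have "c^(k mu) \<le> 1" using c by (rule power_le_one)
  then have "c^(k mu) * p^(sum_list mu) \<le> 1 * p^(sum_list mu)"
    using p by (intro mult_right_mono) auto
  then show "F mu \<le> p^(sum_list mu)" unfolding F by simp
  show "0 \<le> F mu" unfolding F using p c by simp
qed

lemma infsum_decr_lists_len_split:
  fixes F H :: "nat list \<Rightarrow> real"
  assumes Fs: "F summable_on decr_lists_len d"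
    and eq: "\<And>n nu. n \<le> d \<Longrightarrow> nu \<in> decr_lists_len n \<Longrightarrow> F (pad_Suc d (n, nu)) = c n * H nu"
    and H: "\<And>n. n \<le> d \<Longrightarrow> (H has_sum h n) (decr_lists_len n)"
  shows "infsum F (decr_lists_len d) = (\<Sum>n\<le>d. c n * h n)"
proof -
  have hF: "(F has_sum infsum F (decr_lists_len d)) (decr_lists_len d)" using Fs by (simp add: summable_iff_has_sum_infsum)
  have hS: "((\<lambda>z. F (pad_Suc d z)) has_sum infsum F (decr_lists_len d)) (SIGMA n:{..d}. decr_lists_len n)"
    using has_sum_reindex_bij_betw[OF bij_betw_pad_Suc, of F] hF by simp
  have "((\<lambda>n. c n * h n) has_sum infsum F (decr_lists_len d)) {..d}"
  proof (rule has_sum_Sigma'[OF hS])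
    fix n assume n: "n \<in> {..d}"
    have "((\<lambda>nu. c n * H nu) has_sum c n * h n) (decr_lists_len n)" using H n by (intro has_sum_cmult_right) simp
    moreover have "\<And>nu. nu \<in> decr_lists_len n \<Longrightarrow> F (pad_Suc d (n, nu)) = c n * H nu" using eq n by simp
    ultimately show "((\<lambda>nu. F (pad_Suc d (n, nu))) has_sum c n * h n) (decr_lists_len n)"
      by (subst has_sum_cong) auto
  qed
  moreover have "((\<lambda>n. c n * h n) has_sum (\<Sum>n\<le>d. c n * h n)) {..d}" by (rule has_sum_finite) simp
  ultimately show ?thesis using has_sum_unique by blast
qed

lemma decr_lists_len_0: "decr_lists_len 0 = {[]}" by (auto simp: decr_lists_len_def)

lemma qpoch_ratio_telescope:
  fixes p u :: real
  assumes p: "0 \<le> p" "p < 1"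
  defines "K \<equiv> \<lambda>n. qpoch u p n / qpoch p p n"
  shows "(\<Sum>n<d. p^n * K n) * (1 - u) = (1 - p^d) * K d"
proof (induction d)
  case 0 then show ?case by (simp add: K_def)
next
  case (Suc d)
  have nz: "qpoch p p d \<noteq> 0" using qpoch_self_pos[OF p, of d] by simp
  have "p^Suc d < 1" using p by (simp only: power_less_one_iff) simp
  then have nz2: "1 - p * p^d \<noteq> 0" by simp
  have "(\<Sum>n<Suc d. p^n * K n) * (1 - u) = (1 - p^d) * K d + p^d * K d * (1 - u)"
    by (simp only: sum.lessThan_Suc distrib_right Suc.IH)
  also have "\<dots> = (1 - p^Suc d) * K (Suc d)"
    using nz nz2 unfolding K_def by (simp add: qpoch_Suc field_simps)
  finally show ?case .
qed

definition distinct_gf :: "real \<Rightarrow> real \<Rightarrow> nat \<Rightarrow> real" where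
  "distinct_gf y p n = infsum (distinct_weight y p) (decr_lists_len n)"

definition sc_gf :: "real \<Rightarrow> real \<Rightarrow> nat \<Rightarrow> real" where
  "sc_gf x p n = infsum (sc_weight x p) (decr_lists_len n)"

lemma distinct_weight_summable:
  "0 \<le> y \<Longrightarrow> y \<le> 1 \<Longrightarrow> 0 \<le> p \<Longrightarrow> p < 1 \<Longrightarrow> distinct_weight y p summable_on decr_lists_len d"
  by (rule summable_on_decr_lists_len[of p y _ "\<lambda>mu. card (set mu)"]) (auto simp: distinct_weight_def)

lemma sc_weight_summable:
  "0 \<le> x \<Longrightarrow> x \<le> 1 \<Longrightarrow> 0 \<le> p \<Longrightarrow> p < 1 \<Longrightarrow> sc_weight x p summable_on decr_lists_len d"
  by (rule summable_on_decr_lists_len[of p x _ "\<lambda>mu. card (set mu) + card (set mu - {0})"])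
    (auto simp: sc_weight_def)

text \<open>Split by the number n of nonzero entries: deleting the zeros and lowering the other entries
  by one changes the weight by the factor y p^n, or p^n when there were no zeros.\<close>

lemma distinct_gf_recurrence:
  assumes y: "0 \<le> y" "y \<le> 1" and p: "0 \<le> p" "p < 1"
  shows "distinct_gf y p d = (\<Sum>n\<le>d. ((if n < d then y else 1) * p^n) * distinct_gf y p n)"
  unfolding distinct_gf_def
proof (rule infsum_decr_lists_len_split[OF distinct_weight_summable[OF y p]])
  fix n nu assume n: "n \<le> d" and nu: "nu \<in> decr_lists_len n"
  then have l: "length nu = n" by (simp add: decr_lists_len_def)
  show "distinct_weight y p (pad_Suc d (n, nu)) = ((if n < d then y else 1) * p^n) * distinct_weight y p nu"
    unfolding distinct_weight_def card_set_pad_Suc(2)[OF l n] pad_Suc_props(1)[OF l n] by (simp add: power_add)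
next
  fix n show "(distinct_weight y p has_sum infsum (distinct_weight y p) (decr_lists_len n)) (decr_lists_len n)"
    using distinct_weight_summable[OF y p] by (simp add: summable_iff_has_sum_infsum)
qed

lemma sc_gf_recurrence:
  assumes x: "0 \<le> x" "x \<le> 1" and p: "0 \<le> p" "p < 1"
  shows "sc_gf x p d = (\<Sum>n\<le>d. ((if n < d then x else 1) * p^n) * distinct_gf (x^2) p n)"
  unfolding sc_gf_def distinct_gf_def
proof (rule infsum_decr_lists_len_split[OF sc_weight_summable[OF x p]])
  fix n nu assume n: "n \<le> d" and nu: "nu \<in> decr_lists_len n"
  then have l: "length nu = n" by (simp add: decr_lists_len_def)
  show "sc_weight x p (pad_Suc d (n, nu)) = ((if n < d then x else 1) * p^n) * distinct_weight (x^2) p nu"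
    unfolding sc_weight_def distinct_weight_def card_set_pad_Suc[OF l n] pad_Suc_props(1)[OF l n]
    by (simp add: power_add power_mult[symmetric] mult_2)
next
  have "0 \<le> x^2" "x^2 \<le> 1" using x by (auto simp: power_le_one)
  then show "(distinct_weight (x^2) p has_sum infsum (distinct_weight (x^2) p) (decr_lists_len n)) (decr_lists_len n)" for n
    using distinct_weight_summable[OF _ _ p] by (simp add: summable_iff_has_sum_infsum)
qed

lemma distinct_gf_closed_form:
  assumes y: "0 \<le> y" "y \<le> 1" and p: "0 \<le> p" "p < 1"
  shows "distinct_gf y p n = qpoch (1 - y) p n / qpoch p p n"
proof (induction n rule: less_induct)
  case (less n)
  define K where "K n = qpoch (1 - y) p n / qpoch p p n" for n
  show ?case
  proof (cases "n = 0")
    case True then show ?thesis by (simp add: distinct_gf_def decr_lists_len_0 distinct_weight_def)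
  next
    case False
    have "distinct_gf y p n = (\<Sum>k<n. y * p^k * distinct_gf y p k) + p^n * distinct_gf y p n"
      using distinct_gf_recurrence[OF y p, of n] by (simp add: lessThan_Suc_atMost[symmetric])
    also have "(\<Sum>k<n. y * p^k * distinct_gf y p k) = (\<Sum>k<n. p^k * K k) * (1 - (1 - y))"
      unfolding sum_distrib_right by (rule sum.cong) (simp_all add: less K_def mult_ac)
    also have "\<dots> = (1 - p^n) * K n" unfolding K_def by (rule qpoch_ratio_telescope[OF p])
    finally have "(1 - p^n) * distinct_gf y p n = (1 - p^n) * K n" by (simp add: algebra_simps)
    moreover have "p^n < 1" using p False by (simp add: power_less_one_iff)
    ultimately have "distinct_gf y p n = K n" by simp
    then show ?thesis by (simp add: K_def)
  qed
qed

lemma sc_gf_closed_form: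
  assumes x: "0 < x" "x \<le> 1" and p: "0 \<le> p" "p < 1"
  shows "sc_gf x p d = arm_gf x p d"
proof -
  define K where "K n = qpoch (1 - x^2) p n / qpoch p p n" for n
  have x2: "0 \<le> x^2" "x^2 \<le> 1" using x by (auto simp: power_le_one)
  have "sc_gf x p d = x * (\<Sum>k<d. p^k * K k) + p^d * K d"
    using sc_gf_recurrence[of x p d] x p
    by (simp add: lessThan_Suc_atMost[symmetric] distinct_gf_closed_form[OF x2 p] K_def sum_distrib_left mult_ac)
  also have "(\<Sum>k<d. p^k * K k) = (1 - p^d) * K d / x^2"
  proof -
    have "(\<Sum>k<d. p^k * K k) * (1 - (1 - x^2)) = (1 - p^d) * K d" unfolding K_def by (rule qpoch_ratio_telescope[OF p])
    then show ?thesis using x by (simp add: field_simps)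
  qed
  finally have "sc_gf x p d = (1 - p^d) * K d / x + p^d * K d" using x by (simp add: power2_eq_square)
  then show ?thesis unfolding arm_gf_def K_def[symmetric] by (simp add: ring_distribs add_ac)
qed

lemma has_sum_sc_weight:
  assumes "0 < x" "x \<le> 1" "0 \<le> p" "p < 1"
  shows "(sc_weight x p has_sum arm_gf x p d) (decr_lists_len d)"
  using sc_weight_summable[of x p d] assms
  by (simp add: summable_iff_has_sum_infsum sc_gf_closed_form[symmetric] sc_gf_def)

lemma has_sum_decr_lists:
  fixes x q :: real
  assumes x: "0 < x" "x < 1" and q: "\<bar>q\<bar> < 1"
  shows "((\<lambda>mu. q^(length mu * length mu) * sc_weight x (q^2) mu) has_sum
           (\<Sum>\<^sub>\<infinity>d. q^(d*d) * arm_gf x (q^2) d)) decr_lists"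
proof -
  define p where "p = q^2"
  have p: "0 \<le> p" "p < 1" using q by (auto simp: p_def abs_square_less_1)
  have fibre: "(sc_weight x p has_sum arm_gf x p d) (decr_lists_len d)" for d
    using has_sum_sc_weight x p by simp
  have weight_nonneg: "0 \<le> sc_weight x p mu" for mu using x p by (simp add: sc_weight_def)
  define f where "f z = q^(fst z * fst z) * sc_weight x p (snd z)" for z
  have "(\<lambda>d. \<bar>q\<bar>^(d*d) * arm_gf x p d) summable_on UNIV"
    using has_sum_arm_gf_series[OF x, of "\<bar>q\<bar>"] q by (auto simp: p_def summable_on_def)
  then have "(\<lambda>z. \<bar>q\<bar>^(fst z * fst z) * sc_weight x p (snd z)) summable_on (SIGMA d:UNIV. decr_lists_len d)"
    using fibre weight_nonneg by (intro summable_on_SigmaI[where g="\<lambda>d. \<bar>q\<bar>^(d*d) * arm_gf x p d"])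
      (auto intro: has_sum_cmult_right)
  then have "(\<lambda>z. norm (f z)) summable_on (SIGMA d:UNIV. decr_lists_len d)"
    by (rule Infinite_Sum.abs_summable_on_comparison_test') (simp add: f_def abs_mult power_abs weight_nonneg)
  moreover have "((\<lambda>d. q^(d*d) * arm_gf x p d) has_sum (\<Sum>\<^sub>\<infinity>d. q^(d*d) * arm_gf x p d)) UNIV"
    using has_sum_arm_gf_series[OF x q] by (intro has_sum_infsum) (auto simp: p_def summable_on_def)
  ultimately have "(f has_sum (\<Sum>\<^sub>\<infinity>d. q^(d*d) * arm_gf x p d)) (SIGMA d:UNIV. decr_lists_len d)"
    using fibre by (intro has_sum_SigmaI[OF _ _ Infinite_Sum.abs_summable_summable])
      (auto simp: f_def intro: has_sum_cmult_right)
  moreover have "bij_betw (\<lambda>mu. (length mu, mu)) decr_lists (SIGMA d:UNIV. decr_lists_len d)"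
    by (rule bij_betw_byWitness[where f'=snd]) (auto simp: decr_lists_def decr_lists_len_def)
  ultimately show ?thesis
    using has_sum_reindex_bij_betw[of "\<lambda>mu. (length mu, mu)" decr_lists _ f] by (simp add: f_def p_def)
qed

lemma weight_sc_of:
  assumes "sorted_wrt (\<ge>) mu"
  shows "x ^ n1 (sc_of mu) * q ^ psize (sc_of mu) = q^(length mu * length mu) * sc_weight x (q^2) mu"
  unfolding sc_weight_def n1_sc_of[OF assms] psize_sc_of[OF assms] by (simp add: power_add power_mult)

theorem theorem3p1:
  fixes x q :: real
  assumes "0 < x" "x < 1" "\<bar>q\<bar> < 1"
  defines "s \<equiv> sqrt (1 - x\<^sup>2)"
  shows "((\<lambda>la. x ^ n1 la * q ^ psize la) has_sum
           (qpoch_inf (-q) (q\<^sup>2) / (2 * x) *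
             ((1 - sqrt ((1 - x) / (1 + x))) * qpoch_inf (-s) (-q)
              + (1 + sqrt ((1 - x) / (1 + x))) * qpoch_inf s (-q)))) SC"
proof -
  have "((\<lambda>mu. x ^ n1 (sc_of mu) * q ^ psize (sc_of mu)) has_sum
          (\<Sum>\<^sub>\<infinity>d. q^(d*d) * arm_gf x (q^2) d)) decr_lists"
    using has_sum_decr_lists[OF assms(1-3)] weight_sc_of
    by (subst has_sum_cong) (auto simp: decr_lists_def)
  then have "((\<lambda>la. x ^ n1 la * q ^ psize la) has_sum (\<Sum>\<^sub>\<infinity>d. q^(d*d) * arm_gf x (q^2) d)) SC"
    using has_sum_reindex_bij_betw[OF bij_betw_sc_of, of "\<lambda>la. x ^ n1 la * q ^ psize la"] by simp
  then show ?thesis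
    using has_sum_arm_gf_series[OF assms(1-3)] unfolding s_def by (simp add: infsumI)
qed

end
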